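(* Fix integers $p\ge 1$, $N_p\ge 1$, a time index $j\in\mathbb{N}$, a gain $K\in\mathbb{R}^{pn_u\times n_x}$, vectors $z_{l|j}\in\mathbb{R}^{n_x}$ and scalars $\alpha_{l|j}\ge 0$ for $l\in\{0,\dots,N_p\}$, vectors $V_{l|j}\in\mathbb{R}^{pn_u}$ for $l\in\{0,\dots,N_p-1\}$, and the current state $X_j\in\mathbb{R}^{n_x}$. Define the tube sets $\mathcal{X}_{l|j}=\{z_{l|j}\}\oplus\alpha_{l|j}\mathcal{X}_0=\{x: H_x(x-z_{l|j})\le \alpha_{l|j}\mathbf{1}\}$ and the policies $U_{l|j}(X)=KX+V_{l|j}$. Then the following tube conditions hold: (i) $X_j\in\mathcal{X}_{0|j}$; (ii) for all $l\in\{0,\dots,N_p-1\}$, all $X\in\mathcal{X}_{l|j}$, all $\theta\in\Theta$ and all $w_x\in\mathbb{W}_x$: $\bar A(\theta)X+\bar B(\theta)U_{l|j}(X)+w_x\in\mathcal{X}_{l+1|j}$; (iii) for all $l\in\{0,\dots,N_p-1\}$ and all $X\in\mathcal{X}_{l|j}$: $X\in\mathbb{X}$ and $U_{l|j}(X)\in\mathbb{U}^p$; (iv) for all $l\in\{0,\dots,N_p-1\}$, all $X\in\mathcal{X}_{l|j}$, all $\theta\in\Theta$ and all $w_y\in\mathbb{W}_y$: $\bar C(\theta)X+\bar D(\theta)U_{l|j}(X)+w_y\in\mathbb{X}^{p-1}$; if and only if there exist matrices $\Lambda^v_{l|j}\in\mathbb{R}_{\ge 0}^{(q_x+c_x(p-1))\times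 q_\theta}$ (entrywise nonnegative) such that for all $v\in\{1,\dots,n_v\}$ and all $l\in\{0,\dots,N_p-1\}$: $F z_{l|j}+\alpha_{l|j}\bar f\le\mathbf{1}$, $G_pK z_{l|j}+G_pV_{l|j}+\alpha_{l|j}\bar g\le \mathbf{1}$, $H_x(X_j-z_{0|j})\le \alpha_{0|j}\mathbf{1}$, $\Lambda^v_{l|j}h_\theta+H_p e^v_{l|j}\le \Phi_{l+1|j}-\bar w$, $H_pE^v_{l|j}=\Lambda^v_{l|j}H_\theta$.
   Context: Setting: $n_x,n_u,n_p\in\mathbb{N}$, $p\in\mathbb{N}$, $p\ge1$. Constraint sets $\mathbb{X}=\{x\in\mathbb{R}^{n_x}: Fx\le\mathbf{1}\}$ and $\mathbb{U}=\{u\in\mathbb{R}^{n_u}: Gu\le \mathbf{1}\}$ are compact polytopes with $F\in\mathbb{R}^{c_x\times n_x}$, $G\in\mathbb{R}^{c_u\times n_u}$; $\mathbb{U}^p$ and $\mathbb{X}^{p-1}$ denote Cartesian products, and $\mathbf{1}$ is a vector of ones of appropriate size. Matrices $\bar A(\theta)\in\mathbb{R}^{n_x\times n_x}$, $\bar B(\theta)\in\mathbb{R}^{n_x\times pn_u}$, $\bar C(\theta)\in\mathbb{R}^{(p-1)n_x\times n_x}$, $\bar D(\theta)\in\mathbb{R}^{(p-1)n_x\times pn_u}$ depend affinely on $\theta\in\mathbb{R}^{n_p}$: $(\bar A,\bar B,\bar C,\bar D)(\theta)=(\bar A_0,\bar B_0,\bar C_0,\bar D_0)+\sum_{i=1}^{n_p}(\bar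 A_i,\bar B_i,\bar C_i,\bar D_i)[\theta]_i$. The parameter set $\Theta=\{\theta\in\mathbb{R}^{n_p}: H_\theta\theta\le h_\theta\}$ is a nonempty bounded polytope, $H_\theta\in\mathbb{R}^{q_\theta\times n_p}$, $h_\theta\in\mathbb{R}^{q_\theta}$. $\mathbb{W}_x\subseteq\mathbb{R}^{n_x}$ and $\mathbb{W}_y\subseteq\mathbb{R}^{(p-1)n_x}$ are bounded polytopes. $\mathcal{X}_0=\{x\in\mathbb{R}^{n_x}:H_xx\le\mathbf{1}\}$, $H_x\in\mathbb{R}^{q_x\times n_x}$, is a bounded polytope with vertices $x^1,\dots,x^{n_v}$. Notation: $F_p=\mathrm{blkdiag}(F,\dots,F)$ ($p-1$ blocks), $G_p=\mathrm{blkdiag}(G,\dots,G)$ ($p$ blocks), $H_p=\mathrm{blkdiag}(H_x,F_p)$; $[\bar f]_i=\max_{x\in\mathcal{X}_0}[F]_ix$, $[\bar g]_i=\max_{x\in\mathcal{X}_0}[G_pK]_ix$, $[\bar w_x]_i=\max_{w\in\mathbb{W}_x}[H_x]_iw$, $[\bar w_y]_i=\max_{w\in\mathbb{W}_y}[F_p]_iw$ (where $[M]_i$ is the $i$-th row), $\bar w=[\bar w_x^\top,\bar w_y^\top]^\top$, $\Phi_{l+1|j}=[\alpha_{l+1|j}\mathbf{1}^\top,\mathbf{1}^\top]^\top\in\mathbb{R}^{q_x+c_x(p-1)}$. For each vertex: $X^v_{l|j}=z_{l|j}+\alpha_{l|j}x^v$, $U^v_{l|j}=V_{l|j}+KX^v_{l|j}$,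 $E^v_{l|j}$ is the matrix whose $i$-th column ($i=1,\dots,n_p$) is $\begin{bmatrix}\bar A_iX^v_{l|j}+\bar B_iU^v_{l|j}\\ \bar C_iX^v_{l|j}+\bar D_iU^v_{l|j}\end{bmatrix}$, and $e^v_{l|j}=\begin{bmatrix}\bar A_0X^v_{l|j}+\bar B_0U^v_{l|j}-z_{l+1|j}\\ \bar C_0X^v_{l|j}+\bar D_0U^v_{l|j}\end{bmatrix}$. *)

theory Defs
  imports "Jordan_Normal_Form.Matrix"
begin

(* Vectors/matrices are Jordan_Normal_Form vec/mat; vector inequality \<le> is the
   library's componentwise order (which also requires equal dimensions). *)

definition bounded_vset :: "real vec set \<Rightarrow> bool" where
  "bounded_vset S \<longleftrightarrow> (\<exists>M. \<forall>x\<in>S. \<forall>i<dim_vec x. \<bar>x $ i\<bar> \<le> M)"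

definition is_polytope :: "nat \<Rightarrow> real vec set \<Rightarrow> bool" where
  "is_polytope n S \<longleftrightarrow> (\<exists>m A b. A \<in> carrier_mat m n \<and> b \<in> carrier_vec m \<and>
      S = {w \<in> carrier_vec n. A *\<^sub>v w \<le> b})"

definition extreme_point :: "real vec set \<Rightarrow> real vec \<Rightarrow> bool" where
  "extreme_point S x \<longleftrightarrow> x \<in> S \<and>
     \<not> (\<exists>y\<in>S. \<exists>z\<in>S. \<exists>t::real. y \<noteq> z \<and> 0 < t \<and> t < 1 \<and> x = t \<cdot>\<^sub>v y + (1 - t) \<cdot>\<^sub>v z)"

(* affine parameter dependence: M 0 + sum_{i=1..np} [theta]_i M i
   (theta is 0-indexed, so [theta]_i is theta $ (i - 1)) *)
definition aff_mat :: "nat \<Rightarrow> (nat \<Rightarrow> real mat) \<Rightarrow> real vec \<Rightarrow> real mat" where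
  "aff_mat np M \<theta> = mat (dim_row (M 0)) (dim_col (M 0))
     (\<lambda>(r, c). M 0 $$ (r, c) + (\<Sum>i=1..np. \<theta> $ (i - 1) * M i $$ (r, c)))"

definition ones_vec :: "nat \<Rightarrow> real vec" where
  "ones_vec n = vec n (\<lambda>_. 1)"

definition row_max :: "real mat \<Rightarrow> real vec set \<Rightarrow> real vec" where
  "row_max M S = vec (dim_row M) (\<lambda>i. Sup ((\<lambda>x. row M i \<bullet> x) ` S))"

end

theory Submission
  imports Defs
begin

(* Each tube is the image z + \<alpha> X0 of the bounded polytope X0 = {x. Hx x \<le> 1}.  A linear
   constraint holds on such a set, or for all disturbances in a bounded set, iff it holds with
   the rowwise maxima (f-bar, g-bar, w-bar) in place of the varying term; this gives (iii) and
   removes the disturbances from (ii) and (iv).  For fixed \<theta> the rest of (ii) and (iv) is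
   affine in the state, hence holds on the tube iff it holds at the images of the vertices of
   X0: a non-extreme point can be pushed both ways along a segment until new constraints
   become active, and lies between the two endpoints.  At a vertex the condition is affine
   in \<theta>, and the inhomogeneous Farkas lemma turns "for all \<theta> in \<Theta>" into the existence of
   the nonnegative multipliers \<Lambda>. *)

lemma scalar_prod_eq_sum: "w \<in> carrier_vec n \<Longrightarrow> v \<bullet> w = (\<Sum>k<n. v $ k * w $ k)"
  unfolding scalar_prod_def by (auto simp: lessThan_atLeast0)

lemma mult_mat_vec_index_sum:
  "A \<in> carrier_mat m n \<Longrightarrow> w \<in> carrier_vec n \<Longrightarrow> i < m \<Longrightarrow>
   (A *\<^sub>v w) $ i = (\<Sum>k<n. A $$ (i, k) * w $ k)"
  by (auto simp: scalar_prod_eq_sum intro!: sum.cong)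

lemma mult_mat_vec_add_smult_index:
  fixes A :: "real mat"
  assumes "A \<in> carrier_mat m n" "x \<in> carrier_vec n" "d \<in> carrier_vec n" "i < m"
  shows "(A *\<^sub>v (x + s \<cdot>\<^sub>v d)) $ i = (A *\<^sub>v x) $ i + s * (A *\<^sub>v d) $ i"
  using assms by (simp add: mult_add_distrib_mat_vec[of A m n] mult_mat_vec)

lemma less_eq_vec_iff:
  "v \<in> carrier_vec m \<Longrightarrow> w \<in> carrier_vec m \<Longrightarrow> v \<le> w \<longleftrightarrow> (\<forall>i<m. v $ i \<le> w $ i)"
  unfolding less_eq_vec_def by auto

lemma add_le_iff_le_minus_vec:
  fixes u r d :: "real vec"
  assumes "u \<in> carrier_vec m" "r \<in> carrier_vec m" "d \<in> carrier_vec m"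
  shows "u + r \<le> d \<longleftrightarrow> u \<le> d - r"
  using assms by (auto simp: less_eq_vec_def)

lemma convex_comb_le_vec:
  fixes u w b :: "real vec"
  assumes "u \<le> b" "w \<le> b" "0 \<le> t" "t \<le> 1"
  shows "t \<cdot>\<^sub>v u + (1 - t) \<cdot>\<^sub>v w \<le> b"
proof -
  have "t * u $ i + (1 - t) * w $ i \<le> b $ i" if "i < dim_vec b" for i
  proof -
    have "t * u $ i + (1 - t) * w $ i \<le> t * b $ i + (1 - t) * b $ i"
      using assms that by (intro add_mono mult_left_mono) (auto simp: less_eq_vec_def)
    thus ?thesis by (simp add: algebra_simps)
  qed
  thus ?thesis using assms(1,2) by (simp add: less_eq_vec_def)
qed

lemma nonneg_mat_mult_vec_mono:
  fixes M :: "real mat"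
  assumes M: "M \<in> carrier_mat m n" "\<forall>r<m. \<forall>c<n. M $$ (r, c) \<ge> 0"
    and le: "u \<le> w" and w: "w \<in> carrier_vec n"
  shows "M *\<^sub>v u \<le> M *\<^sub>v w"
proof -
  have u: "u \<in> carrier_vec n" using le w by (metis carrier_vecD carrier_vecI less_eq_vec_def)
  have "(M *\<^sub>v u) $ r \<le> (M *\<^sub>v w) $ r" if r: "r < m" for r
  proof -
    have "(\<Sum>k<n. M $$ (r, k) * u $ k) \<le> (\<Sum>k<n. M $$ (r, k) * w $ k)"
      using M(2) r le w by (intro sum_mono mult_left_mono) (auto simp: less_eq_vec_def)
    thus ?thesis
      by (simp only: mult_mat_vec_index_sum[OF M(1) u r] mult_mat_vec_index_sum[OF M(1) w r])
  qed
  thus ?thesis using M(1) by (simp add: less_eq_vec_def)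
qed

lemma append_vec_minus:
  assumes "v \<in> carrier_vec n" "v' \<in> carrier_vec n" "w \<in> carrier_vec m" "w' \<in> carrier_vec m"
  shows "(v @\<^sub>v w) - (v' @\<^sub>v w') = (v - v') @\<^sub>v (w - w')"
  using assms by (intro eq_vecI) (auto simp: carrier_vecD)

lemma diag_block_mat_two_mult_append:
  assumes A: "A \<in> carrier_mat m1 n1" and B: "B \<in> carrier_mat m2 n2"
    and a: "a \<in> carrier_vec n1" and b: "b \<in> carrier_vec n2"
  shows "diag_block_mat [A, B] *\<^sub>v (a @\<^sub>v b) = (A *\<^sub>v a) @\<^sub>v (B *\<^sub>v b)"
proof -
  have "diag_block_mat [A, B] = four_block_mat A (0\<^sub>m m1 n2) (0\<^sub>m m2 n1) B"
    unfolding diag_block_mat.simps(2)[of A "[B]"] diag_block_mat_singleton Let_def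
    using A B by simp
  also have "four_block_mat A (0\<^sub>m m1 n2) (0\<^sub>m m2 n1) B *\<^sub>v (a @\<^sub>v b)
      = (A *\<^sub>v a + 0\<^sub>m m1 n2 *\<^sub>v b) @\<^sub>v (0\<^sub>m m2 n1 *\<^sub>v a + B *\<^sub>v b)"
    by (rule four_block_mat_mult_vec[OF A _ _ B a b]) auto
  finally show ?thesis using A B a b by auto
qed

lemma diag_block_mat_two_carrier:
  "A \<in> carrier_mat m1 n1 \<Longrightarrow> B \<in> carrier_mat m2 n2 \<Longrightarrow>
   diag_block_mat [A, B] \<in> carrier_mat (m1 + m2) (n1 + n2)"
  unfolding carrier_mat_def by (simp add: dim_diag_block_mat)

lemma diag_block_mat_replicate_carrier:
  "M \<in> carrier_mat r c \<Longrightarrow> diag_block_mat (replicate k M) \<in> carrier_mat (r * k) (k * c)"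
  unfolding carrier_mat_def by (auto simp: dim_diag_block_mat sum_list_replicate mult.commute)

section \<open>Farkas' lemma\<close>

text \<open>Bartl's inductive proof: if the last generator a m is needed, project everything
  along a witness x0 onto the hyperplane a m \<bullet> x = 0; the projected system is again valid
  and has one generator less.\<close>

lemma farkas_projection_valid:
  fixes a :: "nat \<Rightarrow> real vec" and b x0 :: "real vec"
  assumes a: "\<forall>i<Suc m. a i \<in> carrier_vec n" and b: "b \<in> carrier_vec n"
    and valid: "\<forall>x\<in>carrier_vec n. (\<forall>i<Suc m. a i \<bullet> x \<le> 0) \<longrightarrow> b \<bullet> x \<le> 0"
    and x0: "x0 \<in> carrier_vec n" and am0: "a m \<bullet> x0 \<noteq> 0"
  defines "P u \<equiv> u - ((u \<bullet> x0) / (a m \<bullet> x0)) \<cdot>\<^sub>v a m"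
  shows "\<forall>x\<in>carrier_vec n. (\<forall>i<m. P (a i) \<bullet> x \<le> 0) \<longrightarrow> P b \<bullet> x \<le> 0"
proof (intro ballI impI)
  fix x assume x: "x \<in> carrier_vec n" and ax: "\<forall>i<m. P (a i) \<bullet> x \<le> 0"
  have am: "a m \<in> carrier_vec n" using a by auto
  define y where "y = x - ((a m \<bullet> x) / (a m \<bullet> x0)) \<cdot>\<^sub>v x0"
  have y: "y \<in> carrier_vec n" using x x0 unfolding y_def by auto
  have proj: "u \<bullet> y = P u \<bullet> x" if "u \<in> carrier_vec n" for u
    using that x x0 am
    by (simp add: y_def P_def scalar_prod_minus_distrib minus_scalar_prod_distrib)
  have "a m \<bullet> y = 0" using proj[OF am] am0 am x by (simp add: P_def minus_scalar_prod_distrib)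
  hence "\<forall>i<Suc m. a i \<bullet> y \<le> 0" using proj a ax by (auto simp: less_Suc_eq)
  hence "b \<bullet> y \<le> 0" using valid y by auto
  thus "P b \<bullet> x \<le> 0" using proj[OF b] by simp
qed

lemma farkas_lemma:
  fixes a :: "nat \<Rightarrow> real vec" and b :: "real vec"
  assumes "\<forall>i<m. a i \<in> carrier_vec n" and "b \<in> carrier_vec n"
    and "\<forall>x\<in>carrier_vec n. (\<forall>i<m. a i \<bullet> x \<le> 0) \<longrightarrow> b \<bullet> x \<le> 0"
  shows "\<exists>\<mu>. (\<forall>i<m. \<mu> i \<ge> 0) \<and> (\<forall>k<n. b $ k = (\<Sum>i<m. \<mu> i * a i $ k))"
  using assms
proof (induction m arbitrary: a b)
  case 0
  have "(\<Sum>k<n. (b $ k)\<^sup>2) = b \<bullet> b"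
    using "0.prems"(2) by (simp add: scalar_prod_eq_sum power2_eq_square)
  also have "\<dots> \<le> 0" using "0.prems" by auto
  finally have "(\<Sum>k<n. (b $ k)\<^sup>2) = 0"
    by (meson order_antisym sum_nonneg zero_le_power2)
  hence "\<forall>k<n. (b $ k)\<^sup>2 = 0" by (simp add: sum_nonneg_eq_0_iff)
  thus ?case by auto
next
  case (Suc m)
  note a = Suc.prems(1) and b = Suc.prems(2) and valid = Suc.prems(3)
  show ?case
  proof (cases "\<forall>x\<in>carrier_vec n. (\<forall>i<m. a i \<bullet> x \<le> 0) \<longrightarrow> b \<bullet> x \<le> 0")
    case True
    from Suc.IH[OF _ b True] a obtain \<mu> where
      "\<forall>i<m. \<mu> i \<ge> 0" "\<forall>k<n. b $ k = (\<Sum>i<m. \<mu> i * a i $ k)" by auto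
    thus ?thesis by (intro exI[of _ "\<mu>(m := 0)"]) auto
  next
    case False
    then obtain x0 where x0: "x0 \<in> carrier_vec n" "\<forall>i<m. a i \<bullet> x0 \<le> 0" "b \<bullet> x0 > 0"
      by auto
    have am: "a m \<in> carrier_vec n" using a by auto
    have am0: "a m \<bullet> x0 > 0" using valid x0 by (metis less_Suc_eq not_less)
    define c where "c u = (u \<bullet> x0) / (a m \<bullet> x0)" for u
    have "\<forall>i<m. a i - c (a i) \<cdot>\<^sub>v a m \<in> carrier_vec n" "b - c b \<cdot>\<^sub>v a m \<in> carrier_vec n"
      using a b by auto
    moreover have "\<forall>x\<in>carrier_vec n. (\<forall>i<m. (a i - c (a i) \<cdot>\<^sub>v a m) \<bullet> x \<le> 0)
        \<longrightarrow> (b - c b \<cdot>\<^sub>v a m) \<bullet> x \<le> 0"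
      using farkas_projection_valid[OF a b valid x0(1)] am0 unfolding c_def by simp
    ultimately obtain \<mu> where \<mu>: "\<forall>i<m. \<mu> i \<ge> 0"
      "\<forall>k<n. (b - c b \<cdot>\<^sub>v a m) $ k = (\<Sum>i<m. \<mu> i * (a i - c (a i) \<cdot>\<^sub>v a m) $ k)"
      using Suc.IH[of "\<lambda>i. a i - c (a i) \<cdot>\<^sub>v a m" "b - c b \<cdot>\<^sub>v a m"] by blast
    define \<nu> where "\<nu> = c b - (\<Sum>i<m. \<mu> i * c (a i))"
    have "(\<Sum>i<m. \<mu> i * (a i \<bullet> x0)) \<le> 0"
      using \<mu>(1) x0(2) by (intro sum_nonpos) (simp add: mult_nonneg_nonpos)
    moreover have "\<nu> = (b \<bullet> x0 - (\<Sum>i<m. \<mu> i * (a i \<bullet> x0))) / (a m \<bullet> x0)"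
      unfolding \<nu>_def c_def by (simp add: sum_divide_distrib diff_divide_distrib)
    ultimately have \<nu>0: "\<nu> \<ge> 0" using x0(3) am0 by simp
    have "b $ k = (\<Sum>i<m. \<mu> i * a i $ k) + \<nu> * a m $ k" if k: "k < n" for k
    proof -
      have "(\<Sum>i<m. \<mu> i * (a i - c (a i) \<cdot>\<^sub>v a m) $ k)
          = (\<Sum>i<m. \<mu> i * a i $ k - \<mu> i * c (a i) * a m $ k)"
        using k a am by (intro sum.cong) (auto simp: algebra_simps)
      hence "b $ k - c b * a m $ k = (\<Sum>i<m. \<mu> i * a i $ k) - (\<Sum>i<m. \<mu> i * c (a i)) * a m $ k"
        using \<mu>(2)[rule_format, OF k] k b am by (simp add: sum_subtractf sum_distrib_right)
      thus ?thesis unfolding \<nu>_def by (simp add: algebra_simps)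
    qed
    thus ?thesis using \<mu>(1) \<nu>0 by (intro exI[of _ "\<mu>(m := \<nu>)"]) (auto simp: less_Suc_eq)
  qed
qed
lemma bounded_linear_objective_recession_nonpos:
  fixes H :: "real mat"
  assumes H: "H \<in> carrier_mat q n" and g: "g \<in> carrier_vec n"
    and \<theta>0: "\<theta>0 \<in> carrier_vec n" "H *\<^sub>v \<theta>0 \<le> h"
    and bound: "\<forall>\<theta>\<in>carrier_vec n. H *\<^sub>v \<theta> \<le> h \<longrightarrow> g \<bullet> \<theta> \<le> \<beta>"
    and d: "d \<in> carrier_vec n" "\<forall>i<q. (H *\<^sub>v d) $ i \<le> 0"
  shows "g \<bullet> d \<le> 0"
proof (rule ccontr)
  assume "\<not> g \<bullet> d \<le> 0"
  hence gd: "g \<bullet> d > 0" by simp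
  have g0: "g \<bullet> \<theta>0 \<le> \<beta>" using bound \<theta>0 by auto
  define s where "s = (\<beta> - g \<bullet> \<theta>0) / (g \<bullet> d) + 1"
  have s0: "s \<ge> 0" unfolding s_def using g0 gd by auto
  have "H *\<^sub>v (\<theta>0 + s \<cdot>\<^sub>v d) \<le> h"
    using \<theta>0 d s0 H mult_mat_vec_add_smult_index[OF H \<theta>0(1) d(1)]
    by (fastforce simp: less_eq_vec_def mult_nonneg_nonpos intro: order_trans[rotated])
  hence "g \<bullet> (\<theta>0 + s \<cdot>\<^sub>v d) \<le> \<beta>" using bound \<theta>0 d by auto
  moreover have "g \<bullet> (\<theta>0 + s \<cdot>\<^sub>v d) = g \<bullet> \<theta>0 + s * (g \<bullet> d)"
    using g \<theta>0 d by (simp add: scalar_prod_add_distrib[of g n])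
  moreover have "s * (g \<bullet> d) = \<beta> - g \<bullet> \<theta>0 + g \<bullet> d"
    unfolding s_def using gd by (simp add: field_simps)
  ultimately show False using gd by simp
qed

text \<open>Homogenization: apply the cone version in dimension n + 1 to the rows (H_i, -h_i),
  the extra row (0, -1) and the target (g, -\<beta>).  A solution x = (\<theta>, t) with t = 0 is a
  recession direction, which is harmless because the polyhedron is nonempty.\<close>

lemma farkas_affine:
  fixes H :: "real mat" and h g :: "real vec" and \<beta> :: real
  assumes H: "H \<in> carrier_mat q n" and h: "h \<in> carrier_vec q" and g: "g \<in> carrier_vec n"
    and \<theta>0: "\<theta>0 \<in> carrier_vec n" "H *\<^sub>v \<theta>0 \<le> h"
    and bound: "\<forall>\<theta>\<in>carrier_vec n. H *\<^sub>v \<theta> \<le> h \<longrightarrow> g \<bullet> \<theta> \<le> \<beta>"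
  shows "\<exists>\<mu>. (\<forall>i<q. \<mu> i \<ge> 0) \<and> (\<forall>k<n. g $ k = (\<Sum>i<q. \<mu> i * H $$ (i, k)))
            \<and> (\<Sum>i<q. \<mu> i * h $ i) \<le> \<beta>"
proof -
  define a where "a i = vec (Suc n) (\<lambda>k. if i < q then (if k < n then H $$ (i, k) else - h $ i)
                                      else (if k < n then 0 else -1))" for i
  define b where "b = vec (Suc n) (\<lambda>k. if k < n then g $ k else - \<beta>)"
  have split: "v \<bullet> x = (\<Sum>k<n. v $ k * x $ k) + v $ n * x $ n" if "x \<in> carrier_vec (Suc n)" for v x
    using that by (simp add: scalar_prod_eq_sum)
  have "\<forall>x\<in>carrier_vec (Suc n). (\<forall>i<Suc q. a i \<bullet> x \<le> 0) \<longrightarrow> b \<bullet> x \<le> 0"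
  proof (intro ballI impI)
    fix x :: "real vec" assume x: "x \<in> carrier_vec (Suc n)" and ax: "\<forall>i<Suc q. a i \<bullet> x \<le> 0"
    define \<theta> where "\<theta> = vec n (\<lambda>k. x $ k)"
    define t where "t = x $ n"
    have \<theta>: "\<theta> \<in> carrier_vec n" unfolding \<theta>_def by auto
    have H\<theta>: "(H *\<^sub>v \<theta>) $ i = (\<Sum>k<n. H $$ (i, k) * x $ k)" if "i < q" for i
      using mult_mat_vec_index_sum[OF H \<theta> that] by (simp add: \<theta>_def)
    have "a q \<bullet> x = - t" using x by (simp add: split a_def t_def)
    hence t0: "t \<ge> 0" using ax by (metis lessI neg_le_0_iff_le)
    have "a i \<bullet> x = (H *\<^sub>v \<theta>) $ i - t * h $ i" if "i < q" for i
      using x that by (simp add: split H\<theta> a_def t_def mult.commute)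
    hence Hle: "(H *\<^sub>v \<theta>) $ i \<le> t * h $ i" if "i < q" for i
      using ax that by (metis diff_le_0_iff_le less_SucI)
    have bx: "b \<bullet> x = g \<bullet> \<theta> - \<beta> * t"
      using x \<theta> by (simp add: split scalar_prod_eq_sum b_def \<theta>_def t_def)
    show "b \<bullet> x \<le> 0"
    proof (cases "t > 0")
      case True
      have "H *\<^sub>v ((1 / t) \<cdot>\<^sub>v \<theta>) \<le> h"
        using H h \<theta> Hle True by (auto simp: less_eq_vec_def mult_mat_vec field_simps)
      hence "g \<bullet> ((1 / t) \<cdot>\<^sub>v \<theta>) \<le> \<beta>" using bound \<theta> by auto
      hence "g \<bullet> \<theta> \<le> \<beta> * t" using True g \<theta> by (simp add: field_simps)
      thus ?thesis using bx by simp
    next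
      case False
      hence "t = 0" using t0 by simp
      hence "g \<bullet> \<theta> \<le> 0"
        using bounded_linear_objective_recession_nonpos[OF H g \<theta>0 bound \<theta>] Hle by simp
      thus ?thesis using bx \<open>t = 0\<close> by simp
    qed
  qed
  moreover have "\<forall>i<Suc q. a i \<in> carrier_vec (Suc n)" "b \<in> carrier_vec (Suc n)"
    unfolding a_def b_def by auto
  ultimately obtain \<mu> where \<mu>: "\<forall>i<Suc q. \<mu> i \<ge> 0"
    "\<forall>k<Suc n. b $ k = (\<Sum>i<Suc q. \<mu> i * a i $ k)"
    using farkas_lemma by blast
  have "g $ k = (\<Sum>i<q. \<mu> i * H $$ (i, k))" if "k < n" for k
    using \<mu>(2)[rule_format, of k] that by (simp add: a_def b_def)
  moreover have "(\<Sum>i<q. \<mu> i * h $ i) = \<beta> - \<mu> q"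
    using \<mu>(2)[rule_format, of n] by (simp add: a_def b_def sum_negf)
  ultimately show ?thesis using \<mu>(1) by (intro exI[of _ \<mu>]) auto
qed

lemma multipliers_imp_polyhedron_affine_ineq:
  fixes E H M :: "real mat" and e \<beta> h :: "real vec"
  assumes E: "E \<in> carrier_mat R n" and e: "e \<in> carrier_vec R" and \<beta>: "\<beta> \<in> carrier_vec R"
    and H: "H \<in> carrier_mat q n" and h: "h \<in> carrier_vec q"
    and M: "M \<in> carrier_mat R q" "\<forall>r<R. \<forall>c<q. M $$ (r, c) \<ge> 0"
    and Mh: "M *\<^sub>v h + e \<le> \<beta>" and EM: "E = M * H"
    and \<theta>: "\<theta> \<in> carrier_vec n" "H *\<^sub>v \<theta> \<le> h"
  shows "e + E *\<^sub>v \<theta> \<le> \<beta>"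
proof -
  have "E *\<^sub>v \<theta> = M *\<^sub>v (H *\<^sub>v \<theta>)" unfolding EM using M H \<theta> by simp
  also have "\<dots> \<le> M *\<^sub>v h" by (rule nonneg_mat_mult_vec_mono[OF M \<theta>(2) h])
  finally have E\<theta>: "E *\<^sub>v \<theta> \<le> M *\<^sub>v h" .
  have "(e + E *\<^sub>v \<theta>) $ r \<le> \<beta> $ r" if r: "r < R" for r
  proof -
    have "(E *\<^sub>v \<theta>) $ r \<le> (M *\<^sub>v h) $ r" using E\<theta> r M E by (simp add: less_eq_vec_def)
    moreover have "(M *\<^sub>v h + e) $ r \<le> \<beta> $ r" using Mh r \<beta> M h e by (simp add: less_eq_vec_def)
    ultimately show ?thesis using r e E M h by simp
  qed
  thus ?thesis using e E \<beta> by (simp add: less_eq_vec_def)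
qed

lemma polyhedron_affine_ineq_imp_multipliers:
  fixes E H :: "real mat" and e \<beta> h :: "real vec"
  assumes E: "E \<in> carrier_mat R n" and e: "e \<in> carrier_vec R" and \<beta>: "\<beta> \<in> carrier_vec R"
    and H: "H \<in> carrier_mat q n" and h: "h \<in> carrier_vec q"
    and \<theta>0: "\<theta>0 \<in> carrier_vec n" "H *\<^sub>v \<theta>0 \<le> h"
    and valid: "\<forall>\<theta>\<in>carrier_vec n. H *\<^sub>v \<theta> \<le> h \<longrightarrow> e + E *\<^sub>v \<theta> \<le> \<beta>"
  shows "\<exists>M. M \<in> carrier_mat R q \<and> (\<forall>r<R. \<forall>c<q. M $$ (r, c) \<ge> 0) \<and> M *\<^sub>v h + e \<le> \<beta> \<and> E = M * H"
proof -
  have "\<forall>r. \<exists>\<mu>. r < R \<longrightarrow> (\<forall>i<q. \<mu> i \<ge> 0) \<and> (\<forall>k<n. E $$ (r, k) = (\<Sum>i<q. \<mu> i * H $$ (i, k)))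
            \<and> (\<Sum>i<q. \<mu> i * h $ i) \<le> \<beta> $ r - e $ r"
  proof (intro allI, cases)
    fix r assume r: "r < R"
    have "\<forall>\<theta>\<in>carrier_vec n. H *\<^sub>v \<theta> \<le> h \<longrightarrow> row E r \<bullet> \<theta> \<le> \<beta> $ r - e $ r"
    proof (intro ballI impI)
      fix \<theta> assume "\<theta> \<in> carrier_vec n" "H *\<^sub>v \<theta> \<le> h"
      hence "e + E *\<^sub>v \<theta> \<le> \<beta>" using valid by blast
      hence "(e + E *\<^sub>v \<theta>) $ r \<le> \<beta> $ r" using r \<beta> unfolding less_eq_vec_def by auto
      thus "row E r \<bullet> \<theta> \<le> \<beta> $ r - e $ r" using r E e by simp
    qed
    from farkas_affine[OF H h _ \<theta>0 this] E r
    show "\<exists>\<mu>. r < R \<longrightarrow> (\<forall>i<q. \<mu> i \<ge> 0) \<and> (\<forall>k<n. E $$ (r, k) = (\<Sum>i<q. \<mu> i * H $$ (i, k)))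
            \<and> (\<Sum>i<q. \<mu> i * h $ i) \<le> \<beta> $ r - e $ r"
      by auto
  qed simp
  from choice[OF this] obtain \<mu> where \<mu>: "\<And>r. r < R \<Longrightarrow> (\<forall>i<q. \<mu> r i \<ge> 0)
      \<and> (\<forall>k<n. E $$ (r, k) = (\<Sum>i<q. \<mu> r i * H $$ (i, k))) \<and> (\<Sum>i<q. \<mu> r i * h $ i) \<le> \<beta> $ r - e $ r"
    by blast
  define M where "M = mat R q (\<lambda>(r, i). \<mu> r i)"
  have M: "M \<in> carrier_mat R q" unfolding M_def by auto
  have "(M *\<^sub>v h + e) $ r \<le> \<beta> $ r" if r: "r < R" for r
  proof -
    have "(M *\<^sub>v h) $ r = (\<Sum>i<q. \<mu> r i * h $ i)"
      using mult_mat_vec_index_sum[OF M h r] r by (simp add: M_def)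
    thus ?thesis using \<mu>[OF r] r M e by simp
  qed
  hence "M *\<^sub>v h + e \<le> \<beta>" using M e \<beta> by (simp add: less_eq_vec_def)
  moreover have "E = M * H"
  proof (rule eq_matI)
    fix r k assume "r < dim_row (M * H)" "k < dim_col (M * H)"
    hence r: "r < R" and k: "k < n" using M H by auto
    have "(M * H) $$ (r, k) = (\<Sum>i<q. \<mu> r i * H $$ (i, k))"
      using M H r k by (simp add: scalar_prod_eq_sum[of _ q] M_def)
    thus "E $$ (r, k) = (M * H) $$ (r, k)" using \<mu>[OF r] k by simp
  qed (use E M H in auto)
  moreover have "\<forall>r<R. \<forall>c<q. M $$ (r, c) \<ge> 0" using \<mu> by (simp add: M_def)
  ultimately show ?thesis using M by blast
qed

lemma polyhedron_affine_ineq_iff_multipliers: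
  fixes E H :: "real mat" and e \<beta> h :: "real vec"
  assumes E: "E \<in> carrier_mat R n" and e: "e \<in> carrier_vec R" and \<beta>: "\<beta> \<in> carrier_vec R"
    and H: "H \<in> carrier_mat q n" and h: "h \<in> carrier_vec q"
    and \<theta>0: "\<theta>0 \<in> carrier_vec n" "H *\<^sub>v \<theta>0 \<le> h"
  shows "(\<forall>\<theta>\<in>carrier_vec n. H *\<^sub>v \<theta> \<le> h \<longrightarrow> e + E *\<^sub>v \<theta> \<le> \<beta>) \<longleftrightarrow>
     (\<exists>M. M \<in> carrier_mat R q \<and> (\<forall>r<R. \<forall>c<q. M $$ (r, c) \<ge> 0) \<and> M *\<^sub>v h + e \<le> \<beta> \<and> E = M * H)"
  using polyhedron_affine_ineq_imp_multipliers[OF E e \<beta> H h \<theta>0]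
    multipliers_imp_polyhedron_affine_ineq[OF E e \<beta> H h] by blast

definition affine_vec_map :: "nat \<Rightarrow> nat \<Rightarrow> (real vec \<Rightarrow> real vec) \<Rightarrow> bool" where
  "affine_vec_map n m f \<longleftrightarrow> (\<forall>x\<in>carrier_vec n. f x \<in> carrier_vec m) \<and>
     (\<forall>x\<in>carrier_vec n. \<forall>y\<in>carrier_vec n. \<forall>t.
        f (t \<cdot>\<^sub>v x + (1 - t) \<cdot>\<^sub>v y) = t \<cdot>\<^sub>v f x + (1 - t) \<cdot>\<^sub>v f y)"

lemma affine_vec_mapD:
  assumes "affine_vec_map n m f" and "x \<in> carrier_vec n"
  shows "f x \<in> carrier_vec m" and "dim_vec (f x) = m"
  using assms unfolding affine_vec_map_def by auto

lemma affine_vec_map_combination: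
  assumes "affine_vec_map n m f" and "x \<in> carrier_vec n" and "y \<in> carrier_vec n"
  shows "f (t \<cdot>\<^sub>v x + (1 - t) \<cdot>\<^sub>v y) = t \<cdot>\<^sub>v f x + (1 - t) \<cdot>\<^sub>v f y"
  using assms unfolding affine_vec_map_def by auto

lemma affine_vec_map_comp:
  assumes f: "affine_vec_map n m f" and g: "affine_vec_map m k g"
  shows "affine_vec_map n k (\<lambda>x. g (f x))"
  unfolding affine_vec_map_def
  by (auto simp: affine_vec_mapD[OF f] affine_vec_map_combination[OF f]
      affine_vec_mapD[OF g] affine_vec_map_combination[OF g])

lemma affine_vec_map_id: "affine_vec_map n n (\<lambda>x. x)"
  unfolding affine_vec_map_def by auto

lemma affine_vec_map_const: "c \<in> carrier_vec m \<Longrightarrow> affine_vec_map n m (\<lambda>x. c)"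
  unfolding affine_vec_map_def by (auto intro!: eq_vecI simp: algebra_simps)

lemma affine_vec_map_mult_mat:
  fixes M :: "real mat"
  assumes M: "M \<in> carrier_mat k m" and f: "affine_vec_map n m f"
  shows "affine_vec_map n k (\<lambda>x. M *\<^sub>v f x)"
  using f M unfolding affine_vec_map_def
  by (auto simp: mult_add_distrib_mat_vec[OF M] mult_mat_vec[OF M])

lemma affine_vec_map_add:
  assumes "affine_vec_map n m f" and "affine_vec_map n m g"
  shows "affine_vec_map n m (\<lambda>x. f x + g x)"
  unfolding affine_vec_map_def
  by (auto intro!: eq_vecI simp: algebra_simps
      affine_vec_mapD[OF assms(1)] affine_vec_mapD[OF assms(2)]
      affine_vec_map_combination[OF assms(1)] affine_vec_map_combination[OF assms(2)])

lemma affine_vec_map_minus: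
  assumes "affine_vec_map n m f" and "affine_vec_map n m g"
  shows "affine_vec_map n m (\<lambda>x. f x - g x)"
  unfolding affine_vec_map_def
  by (auto intro!: eq_vecI simp: algebra_simps
      affine_vec_mapD[OF assms(1)] affine_vec_mapD[OF assms(2)]
      affine_vec_map_combination[OF assms(1)] affine_vec_map_combination[OF assms(2)])

lemma affine_vec_map_smult:
  assumes "affine_vec_map n m f"
  shows "affine_vec_map n m (\<lambda>x. c \<cdot>\<^sub>v f x)"
  unfolding affine_vec_map_def
  by (auto intro!: eq_vecI simp: algebra_simps
      affine_vec_mapD[OF assms] affine_vec_map_combination[OF assms])

lemma affine_vec_map_append:
  assumes "affine_vec_map n m1 f" and "affine_vec_map n m2 g"
  shows "affine_vec_map n (m1 + m2) (\<lambda>x. f x @\<^sub>v g x)"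
  unfolding affine_vec_map_def
  by (auto intro!: eq_vecI simp: affine_vec_mapD[OF assms(1)] affine_vec_mapD[OF assms(2)]
      affine_vec_map_combination[OF assms(1)] affine_vec_map_combination[OF assms(2)])

section \<open>Bounded polytopes and their vertices\<close>

definition unit_polytope :: "nat \<Rightarrow> nat \<Rightarrow> real mat \<Rightarrow> real vec set" where
  "unit_polytope n q H = {x \<in> carrier_vec n. H *\<^sub>v x \<le> ones_vec q}"

definition active_rows :: "real mat \<Rightarrow> real vec \<Rightarrow> nat set" where
  "active_rows H x = {i. i < dim_row H \<and> (H *\<^sub>v x) $ i = 1}"

lemma unit_polytope_memI:
  assumes "H \<in> carrier_mat q n" "x \<in> carrier_vec n" "\<And>i. i < q \<Longrightarrow> (H *\<^sub>v x) $ i \<le> 1"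
  shows "x \<in> unit_polytope n q H"
  using assms by (simp add: unit_polytope_def less_eq_vec_def ones_vec_def)

lemma unit_polytope_memD:
  assumes "x \<in> unit_polytope n q H" "H \<in> carrier_mat q n"
  shows "x \<in> carrier_vec n" "\<And>i. i < q \<Longrightarrow> (H *\<^sub>v x) $ i \<le> 1"
  using assms by (auto simp: unit_polytope_def less_eq_vec_def ones_vec_def)

lemma zero_in_unit_polytope: "H \<in> carrier_mat q n \<Longrightarrow> 0\<^sub>v n \<in> unit_polytope n q H"
  by (intro unit_polytope_memI) auto

lemma unit_polytope_recession_trivial:
  fixes H :: "real mat"
  assumes H: "H \<in> carrier_mat q n" and bdd: "bounded_vset (unit_polytope n q H)"
    and d: "d \<in> carrier_vec n" "\<forall>i<q. (H *\<^sub>v d) $ i \<le> 0"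
  shows "d = 0\<^sub>v n"
proof (rule ccontr)
  assume "d \<noteq> 0\<^sub>v n"
  then obtain k where k: "k < n" "d $ k \<noteq> 0"
    using d(1) by (metis carrier_vecD eq_vecI index_zero_vec)
  obtain M where M: "\<forall>x\<in>unit_polytope n q H. \<forall>i<dim_vec x. \<bar>x $ i\<bar> \<le> M"
    using bdd unfolding bounded_vset_def by auto
  define s where "s = (\<bar>M\<bar> + 1) / \<bar>d $ k\<bar>"
  have s: "s \<ge> 0" unfolding s_def by simp
  have "(H *\<^sub>v (s \<cdot>\<^sub>v d)) $ i \<le> 1" if i: "i < q" for i
  proof -
    have "(H *\<^sub>v (s \<cdot>\<^sub>v d)) $ i = s * (H *\<^sub>v d) $ i" using H d i by (simp add: mult_mat_vec)
    also have "\<dots> \<le> 0" using d(2) s i by (simp add: mult_nonneg_nonpos)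
    finally show ?thesis by simp
  qed
  hence "s \<cdot>\<^sub>v d \<in> unit_polytope n q H"
    using H d by (intro unit_polytope_memI) auto
  hence "\<bar>s * d $ k\<bar> \<le> M" using M k d(1) by fastforce
  moreover have "\<bar>s * d $ k\<bar> = \<bar>M\<bar> + 1" unfolding s_def using k by (simp add: abs_mult)
  ultimately show False by linarith
qed

lemma unit_polytope_push_to_new_facet:
  fixes H :: "real mat"
  assumes H: "H \<in> carrier_mat q n" and bdd: "bounded_vset (unit_polytope n q H)"
    and x: "x \<in> unit_polytope n q H" and d: "d \<in> carrier_vec n" "d \<noteq> 0\<^sub>v n"
    and tangent: "\<forall>i\<in>active_rows H x. (H *\<^sub>v d) $ i = 0"
  shows "\<exists>s>0. x + s \<cdot>\<^sub>v d \<in> unit_polytope n q H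
              \<and> active_rows H x \<subset> active_rows H (x + s \<cdot>\<^sub>v d)"
proof -
  have xc: "x \<in> carrier_vec n" and x1: "\<And>i. i < q \<Longrightarrow> (H *\<^sub>v x) $ i \<le> 1"
    using unit_polytope_memD[OF x H] by auto
  have step: "(H *\<^sub>v (x + s \<cdot>\<^sub>v d)) $ i = (H *\<^sub>v x) $ i + s * (H *\<^sub>v d) $ i" if "i < q" for i s
    by (rule mult_mat_vec_add_smult_index[OF H xc d(1) that])
  define P where "P = {i. i < q \<and> (H *\<^sub>v d) $ i > 0}"
  have "P \<noteq> {}"
    using unit_polytope_recession_trivial[OF H bdd d(1)] d(2) by (force simp: P_def)
  moreover have "finite P" unfolding P_def by auto
  ultimately have P: "finite P" "P \<noteq> {}" by auto
  define r where "r i = (1 - (H *\<^sub>v x) $ i) / (H *\<^sub>v d) $ i" for i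
  define s where "s = Min (r ` P)"
  obtain i0 where i0: "i0 \<in> P" "s = r i0"
    unfolding s_def using P
    by (metis (no_types, lifting) Min_in finite_imageI image_iff image_is_empty)
  have s_le: "s \<le> r i" if "i \<in> P" for i unfolding s_def using P that by auto
  have inactive: "(H *\<^sub>v x) $ i < 1" if "i \<in> P" for i
    using that tangent x1 H by (fastforce simp: P_def active_rows_def order_less_le)
  have s_pos: "s > 0" using i0 inactive[OF i0(1)] by (simp add: r_def P_def)
  have "(H *\<^sub>v x) $ i + s * (H *\<^sub>v d) $ i \<le> 1" if i: "i < q" for i
  proof (cases "i \<in> P")
    case True
    hence "s * (H *\<^sub>v d) $ i \<le> r i * (H *\<^sub>v d) $ i"
      using s_le by (intro mult_right_mono) (auto simp: P_def)
    thus ?thesis using True by (simp add: r_def P_def)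
  next
    case False
    hence "s * (H *\<^sub>v d) $ i \<le> 0" using i s_pos by (simp add: P_def mult_nonneg_nonpos)
    thus ?thesis using x1[OF i] by linarith
  qed
  hence x_new: "x + s \<cdot>\<^sub>v d \<in> unit_polytope n q H"
    using H xc d step by (intro unit_polytope_memI) auto
  have "active_rows H x \<subseteq> active_rows H (x + s \<cdot>\<^sub>v d)"
    using tangent step H by (auto simp: active_rows_def)
  moreover have "i0 \<in> active_rows H (x + s \<cdot>\<^sub>v d)" "i0 \<notin> active_rows H x"
    using i0 step inactive[OF i0(1)] H by (auto simp: active_rows_def P_def r_def)
  ultimately show ?thesis using s_pos x_new by blast
qed

lemma active_rows_segment_tangent:
  fixes H :: "real mat"
  assumes H: "H \<in> carrier_mat q n"
    and y: "y \<in> unit_polytope n q H" and w: "w \<in> unit_polytope n q H" and t: "0 < t" "t < 1"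
    and i: "i \<in> active_rows H (t \<cdot>\<^sub>v y + (1 - t) \<cdot>\<^sub>v w)"
  shows "(H *\<^sub>v (y - w)) $ i = 0" and "(H *\<^sub>v (w - y)) $ i = 0"
proof -
  have yc: "y \<in> carrier_vec n" and wc: "w \<in> carrier_vec n" and iq: "i < q"
    using y w i H by (auto simp: unit_polytope_def active_rows_def)
  have "t * (1 - (H *\<^sub>v y) $ i) + (1 - t) * (1 - (H *\<^sub>v w) $ i) = 0"
    using i H yc wc iq
    by (simp add: active_rows_def mult_add_distrib_mat_vec[OF H] mult_mat_vec algebra_simps)
  moreover have "0 \<le> t * (1 - (H *\<^sub>v y) $ i)" "0 \<le> (1 - t) * (1 - (H *\<^sub>v w) $ i)"
    using unit_polytope_memD[OF y H] unit_polytope_memD[OF w H] iq t by auto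
  ultimately have "t * (1 - (H *\<^sub>v y) $ i) = 0" "(1 - t) * (1 - (H *\<^sub>v w) $ i) = 0"
    by linarith+
  hence "(H *\<^sub>v y) $ i = 1" "(H *\<^sub>v w) $ i = 1" using t by auto
  thus "(H *\<^sub>v (y - w)) $ i = 0" "(H *\<^sub>v (w - y)) $ i = 0"
    using H yc wc iq by (auto simp: scalar_prod_minus_distrib[of _ n])
qed

text \<open>Push the point along both directions of a segment through it until a new constraint
  becomes active.\<close>

lemma unit_polytope_non_extreme_split:
  fixes H :: "real mat"
  assumes H: "H \<in> carrier_mat q n" and bdd: "bounded_vset (unit_polytope n q H)"
    and x: "x \<in> unit_polytope n q H" and not_extreme: "\<not> extreme_point (unit_polytope n q H) x"
  obtains x1 x2 c where "x1 \<in> unit_polytope n q H" "x2 \<in> unit_polytope n q H" "0 \<le> c" "c \<le> 1"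
    "x = c \<cdot>\<^sub>v x1 + (1 - c) \<cdot>\<^sub>v x2"
    "active_rows H x \<subset> active_rows H x1" "active_rows H x \<subset> active_rows H x2"
proof -
  let ?P = "unit_polytope n q H"
  obtain y w t where y: "y \<in> ?P" and w: "w \<in> ?P" and yw: "y \<noteq> w"
    and t: "0 < t" "t < 1" and x_eq: "x = t \<cdot>\<^sub>v y + (1 - t) \<cdot>\<^sub>v w"
    using x not_extreme unfolding extreme_point_def by blast
  have xc: "x \<in> carrier_vec n" and yc: "y \<in> carrier_vec n" and wc: "w \<in> carrier_vec n"
    using x y w by (auto simp: unit_polytope_def)
  have push: "\<exists>s>0. x + s \<cdot>\<^sub>v d \<in> ?P \<and> active_rows H x \<subset> active_rows H (x + s \<cdot>\<^sub>v d)"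
    if d: "d = y - w \<or> d = w - y" for d
  proof (rule unit_polytope_push_to_new_facet[OF H bdd x])
    show "d \<in> carrier_vec n" using d yc wc by auto
    show "d \<noteq> 0\<^sub>v n"
      using d yc wc yw
      by (metis carrier_vecD eq_vecI index_minus_vec(1) index_zero_vec(1) right_minus_eq)
    show "\<forall>i\<in>active_rows H x. (H *\<^sub>v d) $ i = 0"
      using d active_rows_segment_tangent[OF H y w t] x_eq by auto
  qed
  obtain s1 where s1: "s1 > 0" "x + s1 \<cdot>\<^sub>v (y - w) \<in> ?P"
    "active_rows H x \<subset> active_rows H (x + s1 \<cdot>\<^sub>v (y - w))"
    using push by blast
  obtain s2 where s2: "s2 > 0" "x + s2 \<cdot>\<^sub>v (w - y) \<in> ?P"
    "active_rows H x \<subset> active_rows H (x + s2 \<cdot>\<^sub>v (w - y))"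
    using push by blast
  define c where "c = s2 / (s1 + s2)"
  have c: "c * s1 - (1 - c) * s2 = 0" using s1(1) s2(1) by (simp add: c_def field_simps)
  have "x = c \<cdot>\<^sub>v (x + s1 \<cdot>\<^sub>v (y - w)) + (1 - c) \<cdot>\<^sub>v (x + s2 \<cdot>\<^sub>v (w - y))"
  proof (rule eq_vecI)
    fix i assume "i < dim_vec (c \<cdot>\<^sub>v (x + s1 \<cdot>\<^sub>v (y - w)) + (1 - c) \<cdot>\<^sub>v (x + s2 \<cdot>\<^sub>v (w - y)))"
    hence i: "i < n" using xc yc wc by simp
    have "(c \<cdot>\<^sub>v (x + s1 \<cdot>\<^sub>v (y - w)) + (1 - c) \<cdot>\<^sub>v (x + s2 \<cdot>\<^sub>v (w - y))) $ i
        = x $ i + (c * s1 - (1 - c) * s2) * (y $ i - w $ i)"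
      using i xc yc wc by (simp add: algebra_simps)
    thus "x $ i = (c \<cdot>\<^sub>v (x + s1 \<cdot>\<^sub>v (y - w)) + (1 - c) \<cdot>\<^sub>v (x + s2 \<cdot>\<^sub>v (w - y))) $ i"
      using c by simp
  qed (use xc yc wc in simp)
  moreover have "0 \<le> c" "c \<le> 1" using s1(1) s2(1) by (auto simp: c_def)
  ultimately show ?thesis using that s1 s2 by blast
qed

text \<open>Minkowski's theorem in the form needed here, by induction on the number of
  inactive constraints.\<close>

lemma affine_vec_map_le_on_unit_polytope:
  fixes H :: "real mat"
  assumes H: "H \<in> carrier_mat q n" and bdd: "bounded_vset (unit_polytope n q H)"
    and f: "affine_vec_map n m f"
    and vertices: "\<And>v. extreme_point (unit_polytope n q H) v \<Longrightarrow> f v \<le> b"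
    and x: "x \<in> unit_polytope n q H"
  shows "f x \<le> b"
proof -
  let ?P = "unit_polytope n q H"
  have card_le: "card (active_rows H x) \<le> q" for x
    using H card_mono[of "{..<q}" "active_rows H x"] by (auto simp: active_rows_def)
  have more_active: "q - card (active_rows H x') < q - card (active_rows H x)"
    if "active_rows H x \<subset> active_rows H x'" for x x'
    using psubset_card_mono[OF _ that] card_le[of x'] by (simp add: active_rows_def)
  have "\<forall>x\<in>?P. q - card (active_rows H x) = k \<longrightarrow> f x \<le> b" for k
  proof (induction k rule: less_induct)
    case (less k)
    show ?case
    proof (intro ballI impI)
      fix x assume xP: "x \<in> ?P" and k: "q - card (active_rows H x) = k"
      show "f x \<le> b"
      proof (cases "extreme_point ?P x")
        case True
        thus ?thesis using vertices by blast
      next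
        case False
        then obtain x1 x2 c where x12: "x1 \<in> ?P" "x2 \<in> ?P" and c: "0 \<le> c" "c \<le> 1"
          and x_eq: "x = c \<cdot>\<^sub>v x1 + (1 - c) \<cdot>\<^sub>v x2"
          and grows: "active_rows H x \<subset> active_rows H x1" "active_rows H x \<subset> active_rows H x2"
          using unit_polytope_non_extreme_split[OF H bdd xP] by blast
        have "f x1 \<le> b" "f x2 \<le> b"
          using less.IH x12 more_active[OF grows(1)] more_active[OF grows(2)] k by blast+
        moreover have "f x = c \<cdot>\<^sub>v f x1 + (1 - c) \<cdot>\<^sub>v f x2"
          using affine_vec_map_combination[OF f] x12 x_eq by (simp add: unit_polytope_def)
        ultimately show ?thesis using c by (simp add: convex_comb_le_vec)
      qed
    qed
  qed
  thus ?thesis using x by blast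
qed

lemma unit_polytope_has_extreme_point:
  fixes H :: "real mat"
  assumes H: "H \<in> carrier_mat q n" and bdd: "bounded_vset (unit_polytope n q H)"
  shows "\<exists>v. extreme_point (unit_polytope n q H) v"
proof (rule ccontr)
  assume none: "\<nexists>v. extreme_point (unit_polytope n q H) v"
  have "vec 1 (\<lambda>_. 1) \<le> (0\<^sub>v 1 :: real vec)"
    using affine_vec_map_le_on_unit_polytope[OF H bdd affine_vec_map_const[of "vec 1 (\<lambda>_. 1)"]]
      none zero_in_unit_polytope[OF H] by auto
  thus False by (force simp: less_eq_vec_def)
qed
section \<open>Robust linear constraints\<close>

lemma bounded_vset_scalar_prod_bdd_above:
  assumes S: "S \<subseteq> carrier_vec n" and bdd: "bounded_vset S"
  shows "bdd_above ((\<lambda>x. g \<bullet> x) ` S)"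
proof -
  obtain M where M: "\<forall>x\<in>S. \<forall>i<dim_vec x. \<bar>x $ i\<bar> \<le> M"
    using bdd unfolding bounded_vset_def by auto
  have "g \<bullet> x \<le> (\<Sum>k<n. \<bar>g $ k\<bar> * M)" if x: "x \<in> S" for x
  proof -
    have xc: "x \<in> carrier_vec n" using S x by auto
    have "g $ k * x $ k \<le> \<bar>g $ k\<bar> * M" if "k < n" for k
    proof -
      have "g $ k * x $ k \<le> \<bar>g $ k\<bar> * \<bar>x $ k\<bar>" by (metis abs_ge_self abs_mult)
      also have "\<dots> \<le> \<bar>g $ k\<bar> * M" using M x xc that by (intro mult_left_mono) auto
      finally show ?thesis .
    qed
    thus ?thesis unfolding scalar_prod_eq_sum[OF xc] by (intro sum_mono) auto
  qed
  thus ?thesis by (intro bdd_aboveI) auto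
qed

lemma scaled_le_iff_Sup:
  fixes \<alpha> :: real
  assumes S: "S \<subseteq> carrier_vec n" "S \<noteq> {}" "bounded_vset S" and \<alpha>: "\<alpha> \<ge> 0"
  shows "(\<forall>x\<in>S. c + \<alpha> * (g \<bullet> x) \<le> \<beta>) \<longleftrightarrow> c + \<alpha> * Sup ((\<lambda>x. g \<bullet> x) ` S) \<le> \<beta>"
proof (cases "\<alpha> = 0")
  case True
  thus ?thesis using S(2) by auto
next
  case False
  hence \<alpha>: "\<alpha> > 0" using \<alpha> by auto
  have "(\<forall>x\<in>S. c + \<alpha> * (g \<bullet> x) \<le> \<beta>) \<longleftrightarrow> (\<forall>x\<in>S. g \<bullet> x \<le> (\<beta> - c) / \<alpha>)"
    using \<alpha> by (simp add: field_simps)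
  also have "\<dots> \<longleftrightarrow> Sup ((\<lambda>x. g \<bullet> x) ` S) \<le> (\<beta> - c) / \<alpha>"
    using cSup_le_iff[OF _ bounded_vset_scalar_prod_bdd_above[OF S(1,3)]] S(2) by simp
  also have "\<dots> \<longleftrightarrow> c + \<alpha> * Sup ((\<lambda>x. g \<bullet> x) ` S) \<le> \<beta>"
    using \<alpha> by (simp add: field_simps)
  finally show ?thesis .
qed

lemma robust_le_iff_row_max:
  fixes H :: "real mat" and \<alpha> :: real
  assumes S: "S \<subseteq> carrier_vec n" "S \<noteq> {}" "bounded_vset S" and \<alpha>: "\<alpha> \<ge> 0"
    and H: "H \<in> carrier_mat m n" and c: "c \<in> carrier_vec m" and b: "b \<in> carrier_vec m"
  shows "(\<forall>x\<in>S. c + \<alpha> \<cdot>\<^sub>v (H *\<^sub>v x) \<le> b) \<longleftrightarrow> c + \<alpha> \<cdot>\<^sub>v row_max H S \<le> b"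
proof -
  have "c + \<alpha> \<cdot>\<^sub>v (H *\<^sub>v x) \<le> b \<longleftrightarrow> (\<forall>i<m. c $ i + \<alpha> * (row H i \<bullet> x) \<le> b $ i)" for x
    using H c b by (simp add: less_eq_vec_def)
  hence "(\<forall>x\<in>S. c + \<alpha> \<cdot>\<^sub>v (H *\<^sub>v x) \<le> b) \<longleftrightarrow> (\<forall>i<m. \<forall>x\<in>S. c $ i + \<alpha> * (row H i \<bullet> x) \<le> b $ i)"
    by blast
  also have "\<dots> \<longleftrightarrow> (\<forall>i<m. c $ i + \<alpha> * Sup ((\<lambda>x. row H i \<bullet> x) ` S) \<le> b $ i)"
    using scaled_le_iff_Sup[OF S \<alpha>] by blast
  also have "\<dots> \<longleftrightarrow> c + \<alpha> \<cdot>\<^sub>v row_max H S \<le> b"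
    using H c b by (simp add: less_eq_vec_iff[of _ m] row_max_def)
  finally show ?thesis .
qed

lemma robust_disturbance_le_iff:
  fixes H :: "real mat"
  assumes W: "W \<subseteq> carrier_vec n" "W \<noteq> {}" "bounded_vset W"
    and H: "H \<in> carrier_mat m n" and a: "a \<in> carrier_vec n" and d: "d \<in> carrier_vec m"
  shows "(\<forall>w\<in>W. H *\<^sub>v (a + w) \<le> d) \<longleftrightarrow> H *\<^sub>v a \<le> d - row_max H W"
proof -
  have "H *\<^sub>v (a + w) = H *\<^sub>v a + 1 \<cdot>\<^sub>v (H *\<^sub>v w)" if "w \<in> W" for w
    using that W(1) H a by (auto simp: mult_add_distrib_mat_vec[OF H])
  hence "(\<forall>w\<in>W. H *\<^sub>v (a + w) \<le> d) \<longleftrightarrow> (\<forall>w\<in>W. H *\<^sub>v a + 1 \<cdot>\<^sub>v (H *\<^sub>v w) \<le> d)"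
    by simp
  also have "\<dots> \<longleftrightarrow> H *\<^sub>v a + 1 \<cdot>\<^sub>v row_max H W \<le> d"
    using H a d by (intro robust_le_iff_row_max[OF W]) auto
  also have "\<dots> \<longleftrightarrow> H *\<^sub>v a \<le> d - row_max H W"
    using add_le_iff_le_minus_vec[of "H *\<^sub>v a" m "row_max H W" d] H a d by (simp add: row_max_def)
  finally show ?thesis .
qed

lemma tube_eq_image_unit_polytope:
  fixes H :: "real mat" and \<alpha> :: real
  assumes H: "H \<in> carrier_mat q n" and bdd: "bounded_vset (unit_polytope n q H)"
    and z: "z \<in> carrier_vec n" and \<alpha>: "\<alpha> \<ge> 0"
  shows "{X \<in> carrier_vec n. H *\<^sub>v (X - z) \<le> \<alpha> \<cdot>\<^sub>v ones_vec q}
           = (\<lambda>x. z + \<alpha> \<cdot>\<^sub>v x) ` unit_polytope n q H"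
proof (intro equalityI subsetI)
  fix X assume "X \<in> (\<lambda>x. z + \<alpha> \<cdot>\<^sub>v x) ` unit_polytope n q H"
  then obtain x where x: "x \<in> unit_polytope n q H" and X: "X = z + \<alpha> \<cdot>\<^sub>v x" by auto
  have xc: "x \<in> carrier_vec n" using x by (simp add: unit_polytope_def)
  have "X - z = \<alpha> \<cdot>\<^sub>v x" using X xc z by (intro eq_vecI) auto
  moreover have "\<alpha> * (H *\<^sub>v x) $ i \<le> \<alpha>" if "i < q" for i
    using unit_polytope_memD(2)[OF x H that] \<alpha> by (simp add: mult_left_le)
  ultimately show "X \<in> {X \<in> carrier_vec n. H *\<^sub>v (X - z) \<le> \<alpha> \<cdot>\<^sub>v ones_vec q}"
    using X xc z H by (simp add: mult_mat_vec less_eq_vec_def ones_vec_def)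
next
  fix X assume "X \<in> {X \<in> carrier_vec n. H *\<^sub>v (X - z) \<le> \<alpha> \<cdot>\<^sub>v ones_vec q}"
  hence X: "X \<in> carrier_vec n" and le: "\<And>i. i < q \<Longrightarrow> (H *\<^sub>v (X - z)) $ i \<le> \<alpha>"
    using H by (auto simp: less_eq_vec_def ones_vec_def)
  show "X \<in> (\<lambda>x. z + \<alpha> \<cdot>\<^sub>v x) ` unit_polytope n q H"
  proof (cases "\<alpha> = 0")
    case True
    hence "X - z = 0\<^sub>v n"
      using unit_polytope_recession_trivial[OF H bdd] X z le by auto
    hence "X = z"
      using X z by (metis carrier_vecD eq_vecI index_minus_vec(1) index_zero_vec(1) right_minus_eq)
    thus ?thesis using z zero_in_unit_polytope[OF H] by (intro image_eqI[of _ _ "0\<^sub>v n"]) auto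
  next
    case False
    hence \<alpha>: "\<alpha> > 0" using \<alpha> by simp
    have "(1 / \<alpha>) \<cdot>\<^sub>v (X - z) \<in> unit_polytope n q H"
      using H X z le \<alpha> by (intro unit_polytope_memI) (auto simp: mult_mat_vec field_simps)
    moreover have "X = z + \<alpha> \<cdot>\<^sub>v ((1 / \<alpha>) \<cdot>\<^sub>v (X - z))" using X z \<alpha> by (intro eq_vecI) auto
    ultimately show ?thesis by blast
  qed
qed

lemma tube_affine_constraint_iff:
  fixes H M :: "real mat" and \<alpha> :: real
  assumes H: "H \<in> carrier_mat q n" and bdd: "bounded_vset (unit_polytope n q H)"
    and z: "z \<in> carrier_vec n" and \<alpha>: "\<alpha> \<ge> 0"
    and M: "M \<in> carrier_mat m n" and v: "v \<in> carrier_vec m" and d: "d \<in> carrier_vec m"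
  shows "(\<forall>X\<in>{X \<in> carrier_vec n. H *\<^sub>v (X - z) \<le> \<alpha> \<cdot>\<^sub>v ones_vec q}. M *\<^sub>v X + v \<le> d) \<longleftrightarrow>
         M *\<^sub>v z + v + \<alpha> \<cdot>\<^sub>v row_max M (unit_polytope n q H) \<le> d"
proof -
  let ?P = "unit_polytope n q H"
  have P: "?P \<subseteq> carrier_vec n" "?P \<noteq> {}"
    using zero_in_unit_polytope[OF H] unfolding unit_polytope_def by blast+
  have "M *\<^sub>v (z + \<alpha> \<cdot>\<^sub>v x) + v = M *\<^sub>v z + v + \<alpha> \<cdot>\<^sub>v (M *\<^sub>v x)" if "x \<in> carrier_vec n" for x
    using M z v that
    by (intro eq_vecI) (auto simp: mult_add_distrib_mat_vec[OF M] mult_mat_vec[OF M])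
  hence "(\<forall>x\<in>?P. M *\<^sub>v (z + \<alpha> \<cdot>\<^sub>v x) + v \<le> d) \<longleftrightarrow> (\<forall>x\<in>?P. M *\<^sub>v z + v + \<alpha> \<cdot>\<^sub>v (M *\<^sub>v x) \<le> d)"
    using P(1) by (intro ball_cong) auto
  also have "\<dots> \<longleftrightarrow> M *\<^sub>v z + v + \<alpha> \<cdot>\<^sub>v row_max M ?P \<le> d"
    using M z v d by (intro robust_le_iff_row_max[OF P bdd \<alpha> M]) auto
  finally show ?thesis
    unfolding tube_eq_image_unit_polytope[OF H bdd z \<alpha>] by simp
qed

lemma robust_block_step_iff:
  fixes Hx Fp :: "real mat" and \<gamma> :: real
  assumes Hx: "Hx \<in> carrier_mat qx n" and Fp: "Fp \<in> carrier_mat mF nY"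
    and a: "a \<in> carrier_vec n" and z: "z \<in> carrier_vec n" and b: "b \<in> carrier_vec nY"
    and Wx: "Wx \<subseteq> carrier_vec n" "Wx \<noteq> {}" "bounded_vset Wx"
    and Wy: "Wy \<subseteq> carrier_vec nY" "Wy \<noteq> {}" "bounded_vset Wy"
  shows "((\<forall>wx\<in>Wx. a + wx \<in> {x \<in> carrier_vec n. Hx *\<^sub>v (x - z) \<le> \<gamma> \<cdot>\<^sub>v ones_vec qx})
        \<and> (\<forall>wy\<in>Wy. b + wy \<in> {y \<in> carrier_vec nY. Fp *\<^sub>v y \<le> ones_vec mF})) \<longleftrightarrow>
      diag_block_mat [Hx, Fp] *\<^sub>v ((a - z) @\<^sub>v b)
        \<le> ((\<gamma> \<cdot>\<^sub>v ones_vec qx) @\<^sub>v ones_vec mF) - (row_max Hx Wx @\<^sub>v row_max Fp Wy)"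
proof -
  have rm: "row_max Hx Wx \<in> carrier_vec qx" "row_max Fp Wy \<in> carrier_vec mF"
    using Hx Fp by (auto simp: row_max_def)
  have "(\<forall>wx\<in>Wx. a + wx \<in> {x \<in> carrier_vec n. Hx *\<^sub>v (x - z) \<le> \<gamma> \<cdot>\<^sub>v ones_vec qx})
      \<longleftrightarrow> (\<forall>wx\<in>Wx. Hx *\<^sub>v ((a - z) + wx) \<le> \<gamma> \<cdot>\<^sub>v ones_vec qx)"
  proof (intro ball_cong refl)
    fix wx assume "wx \<in> Wx"
    hence wx: "wx \<in> carrier_vec n" using Wx(1) by auto
    have "a + wx - z = (a - z) + wx" using a z wx by (intro eq_vecI) auto
    thus "a + wx \<in> {x \<in> carrier_vec n. Hx *\<^sub>v (x - z) \<le> \<gamma> \<cdot>\<^sub>v ones_vec qx}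
        \<longleftrightarrow> Hx *\<^sub>v ((a - z) + wx) \<le> \<gamma> \<cdot>\<^sub>v ones_vec qx" using a wx by simp
  qed
  also have "\<dots> \<longleftrightarrow> Hx *\<^sub>v (a - z) \<le> \<gamma> \<cdot>\<^sub>v ones_vec qx - row_max Hx Wx"
    using a z by (intro robust_disturbance_le_iff[OF Wx Hx]) (auto simp: ones_vec_def)
  finally have state_part: "(\<forall>wx\<in>Wx. a + wx \<in> {x \<in> carrier_vec n. Hx *\<^sub>v (x - z) \<le> \<gamma> \<cdot>\<^sub>v ones_vec qx})
      \<longleftrightarrow> Hx *\<^sub>v (a - z) \<le> \<gamma> \<cdot>\<^sub>v ones_vec qx - row_max Hx Wx" .
  have "(\<forall>wy\<in>Wy. b + wy \<in> {y \<in> carrier_vec nY. Fp *\<^sub>v y \<le> ones_vec mF})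
      \<longleftrightarrow> (\<forall>wy\<in>Wy. Fp *\<^sub>v (b + wy) \<le> ones_vec mF)"
    using Wy(1) b by auto
  also have "\<dots> \<longleftrightarrow> Fp *\<^sub>v b \<le> ones_vec mF - row_max Fp Wy"
    using b by (intro robust_disturbance_le_iff[OF Wy Fp]) (auto simp: ones_vec_def)
  finally have output_part: "(\<forall>wy\<in>Wy. b + wy \<in> {y \<in> carrier_vec nY. Fp *\<^sub>v y \<le> ones_vec mF})
      \<longleftrightarrow> Fp *\<^sub>v b \<le> ones_vec mF - row_max Fp Wy" .
  have lhs: "diag_block_mat [Hx, Fp] *\<^sub>v ((a - z) @\<^sub>v b) = (Hx *\<^sub>v (a - z)) @\<^sub>v (Fp *\<^sub>v b)"
    using a z by (intro diag_block_mat_two_mult_append[OF Hx Fp _ b]) auto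
  have rhs: "((\<gamma> \<cdot>\<^sub>v ones_vec qx) @\<^sub>v ones_vec mF) - (row_max Hx Wx @\<^sub>v row_max Fp Wy)
      = (\<gamma> \<cdot>\<^sub>v ones_vec qx - row_max Hx Wx) @\<^sub>v (ones_vec mF - row_max Fp Wy)"
    using rm by (intro append_vec_minus) (auto simp: ones_vec_def)
  show ?thesis
    unfolding state_part output_part lhs rhs
    using a z Hx rm by (intro append_vec_le[symmetric, of _ qx]) (auto simp: ones_vec_def)
qed

section \<open>Affine dependence on the parameter\<close>

lemma aff_mat_carrier: "M 0 \<in> carrier_mat m n \<Longrightarrow> aff_mat np M \<theta> \<in> carrier_mat m n"
  unfolding aff_mat_def carrier_mat_def by auto

lemma aff_mat_mult_vec_index:
  assumes M: "\<And>i. i \<le> np \<Longrightarrow> M i \<in> carrier_mat m n" and X: "X \<in> carrier_vec n" and r: "r < m"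
  shows "(aff_mat np M \<theta> *\<^sub>v X) $ r = (M 0 *\<^sub>v X) $ r + (\<Sum>c<np. \<theta> $ c * (M (c + 1) *\<^sub>v X) $ r)"
proof -
  have M0: "M 0 \<in> carrier_mat m n" using M by auto
  have "(aff_mat np M \<theta> *\<^sub>v X) $ r
      = (\<Sum>k<n. (M 0 $$ (r, k) + (\<Sum>i=1..np. \<theta> $ (i - 1) * M i $$ (r, k))) * X $ k)"
    using mult_mat_vec_index_sum[OF aff_mat_carrier[of M, OF M0] X r] M0 r
    by (auto simp: aff_mat_def intro!: sum.cong)
  also have "\<dots> = (\<Sum>k<n. M 0 $$ (r, k) * X $ k)
      + (\<Sum>i=1..np. \<theta> $ (i - 1) * (\<Sum>k<n. M i $$ (r, k) * X $ k))"
    by (simp add: distrib_right sum.distrib sum_distrib_left sum_distrib_right mult.assoc)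
      (rule sum.swap)
  also have "\<dots> = (M 0 *\<^sub>v X) $ r + (\<Sum>c<np. \<theta> $ c * (M (c + 1) *\<^sub>v X) $ r)"
    using mult_mat_vec_index_sum[OF M0 X r] mult_mat_vec_index_sum[OF M X r]
    by (simp add: sum.atLeast1_atMost_eq)
  finally show ?thesis .
qed

lemma aff_mat_pair_mult_vec_index:
  assumes P: "\<And>i. i \<le> np \<Longrightarrow> P i \<in> carrier_mat m n" and Q: "\<And>i. i \<le> np \<Longrightarrow> Q i \<in> carrier_mat m N"
    and X: "X \<in> carrier_vec n" and U: "U \<in> carrier_vec N" and r: "r < m"
  shows "(aff_mat np P \<theta> *\<^sub>v X + aff_mat np Q \<theta> *\<^sub>v U) $ r
     = (P 0 *\<^sub>v X + Q 0 *\<^sub>v U) $ r + (\<Sum>c<np. (P (c + 1) *\<^sub>v X + Q (c + 1) *\<^sub>v U) $ r * \<theta> $ c)"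
proof -
  have P0: "P 0 \<in> carrier_mat m n" and Q0: "Q 0 \<in> carrier_mat m N" using P Q by auto
  have "(aff_mat np P \<theta> *\<^sub>v X + aff_mat np Q \<theta> *\<^sub>v U) $ r
      = (aff_mat np P \<theta> *\<^sub>v X) $ r + (aff_mat np Q \<theta> *\<^sub>v U) $ r"
    using aff_mat_carrier[of P m n np \<theta>, OF P0] aff_mat_carrier[of Q m N np \<theta>, OF Q0] r by simp
  also have "\<dots> = (P 0 *\<^sub>v X) $ r + (Q 0 *\<^sub>v U) $ r
      + ((\<Sum>c<np. \<theta> $ c * (P (c + 1) *\<^sub>v X) $ r) + (\<Sum>c<np. \<theta> $ c * (Q (c + 1) *\<^sub>v U) $ r))"
    using aff_mat_mult_vec_index[where M = P and \<theta> = \<theta>, OF P X r]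
      aff_mat_mult_vec_index[where M = Q and \<theta> = \<theta>, OF Q U r] by simp
  also have "\<dots> = (P 0 *\<^sub>v X + Q 0 *\<^sub>v U) $ r + (\<Sum>c<np. (P (c + 1) *\<^sub>v X + Q (c + 1) *\<^sub>v U) $ r * \<theta> $ c)"
  proof -
    have "(P (c + 1) *\<^sub>v X + Q (c + 1) *\<^sub>v U) $ r * \<theta> $ c
        = \<theta> $ c * (P (c + 1) *\<^sub>v X) $ r + \<theta> $ c * (Q (c + 1) *\<^sub>v U) $ r" if "c < np" for c
      using P[of "c + 1"] Q[of "c + 1"] that r by (simp add: algebra_simps)
    thus ?thesis using P0 Q0 r by (simp add: sum.distrib)
  qed
  finally show ?thesis .
qed

text \<open>At X = X^v and U = U^v these are the paper's e^v and E^v, with z' = z_{l+1}; column c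
  of the sensitivity multiplies [\<theta>]_(c+1), stored as \<theta> $ c.\<close>

definition response_offset ::
  "(nat \<Rightarrow> real mat) \<Rightarrow> (nat \<Rightarrow> real mat) \<Rightarrow> (nat \<Rightarrow> real mat) \<Rightarrow> (nat \<Rightarrow> real mat) \<Rightarrow>
   real vec \<Rightarrow> real vec \<Rightarrow> real vec \<Rightarrow> real vec" where
  "response_offset Ab Bb Cb Db X U z' = (Ab 0 *\<^sub>v X + Bb 0 *\<^sub>v U - z') @\<^sub>v (Cb 0 *\<^sub>v X + Db 0 *\<^sub>v U)"

definition response_sensitivity ::
  "nat \<Rightarrow> nat \<Rightarrow> (nat \<Rightarrow> real mat) \<Rightarrow> (nat \<Rightarrow> real mat) \<Rightarrow> (nat \<Rightarrow> real mat) \<Rightarrow>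
   (nat \<Rightarrow> real mat) \<Rightarrow> real vec \<Rightarrow> real vec \<Rightarrow> real mat" where
  "response_sensitivity R np Ab Bb Cb Db X U =
     mat R np (\<lambda>(r, c). ((Ab (c + 1) *\<^sub>v X + Bb (c + 1) *\<^sub>v U)
                         @\<^sub>v (Cb (c + 1) *\<^sub>v X + Db (c + 1) *\<^sub>v U)) $ r)"

lemma aff_response_eq_offset_plus_sensitivity:
  fixes Ab Bb Cb Db :: "nat \<Rightarrow> real mat"
  assumes Ab: "\<And>i. i \<le> np \<Longrightarrow> Ab i \<in> carrier_mat n n"
    and Bb: "\<And>i. i \<le> np \<Longrightarrow> Bb i \<in> carrier_mat n N"
    and Cb: "\<And>i. i \<le> np \<Longrightarrow> Cb i \<in> carrier_mat NY n"
    and Db: "\<And>i. i \<le> np \<Longrightarrow> Db i \<in> carrier_mat NY N"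
    and X: "X \<in> carrier_vec n" and U: "U \<in> carrier_vec N" and z': "z' \<in> carrier_vec n"
    and \<theta>: "\<theta> \<in> carrier_vec np"
  shows "(aff_mat np Ab \<theta> *\<^sub>v X + aff_mat np Bb \<theta> *\<^sub>v U - z')
          @\<^sub>v (aff_mat np Cb \<theta> *\<^sub>v X + aff_mat np Db \<theta> *\<^sub>v U)
       = response_offset Ab Bb Cb Db X U z' + response_sensitivity (n + NY) np Ab Bb Cb Db X U *\<^sub>v \<theta>"
    (is "?Y = ?e + ?E *\<^sub>v \<theta>")
proof (rule eq_vecI)
  have carr: "aff_mat np Ab \<theta> \<in> carrier_mat n n" "aff_mat np Bb \<theta> \<in> carrier_mat n N"
    "aff_mat np Cb \<theta> \<in> carrier_mat NY n" "aff_mat np Db \<theta> \<in> carrier_mat NY N"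
    using Ab[of 0] Bb[of 0] Cb[of 0] Db[of 0] by (simp_all add: aff_mat_carrier)
  have E: "?E \<in> carrier_mat (n + NY) np" by (simp add: response_sensitivity_def)
  show "dim_vec ?Y = dim_vec (?e + ?E *\<^sub>v \<theta>)"
    using carr E z' by (simp add: response_offset_def)
  fix r assume "r < dim_vec (?e + ?E *\<^sub>v \<theta>)"
  hence r: "r < n + NY" using E by simp
  have E\<theta>: "(?E *\<^sub>v \<theta>) $ r = (\<Sum>c<np. ?E $$ (r, c) * \<theta> $ c)"
    by (rule mult_mat_vec_index_sum[OF E \<theta> r])
  have dims_c: "dim_vec (Ab (c + 1) *\<^sub>v X + Bb (c + 1) *\<^sub>v U) = n"
    "dim_vec (Cb (c + 1) *\<^sub>v X + Db (c + 1) *\<^sub>v U) = NY" if "c < np" for c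
    using Ab[of "c + 1"] Bb[of "c + 1"] Cb[of "c + 1"] Db[of "c + 1"] that by auto
  have A0: "Ab 0 \<in> carrier_mat n n" "Bb 0 \<in> carrier_mat n N"
    "Cb 0 \<in> carrier_mat NY n" "Db 0 \<in> carrier_mat NY N" using Ab Bb Cb Db by auto
  show "?Y $ r = (?e + ?E *\<^sub>v \<theta>) $ r"
  proof (cases "r < n")
    case True
    have "?Y $ r = (aff_mat np Ab \<theta> *\<^sub>v X + aff_mat np Bb \<theta> *\<^sub>v U) $ r - z' $ r"
      using True carr X U z' by simp
    also have "\<dots> = (Ab 0 *\<^sub>v X + Bb 0 *\<^sub>v U) $ r - z' $ r
        + (\<Sum>c<np. (Ab (c + 1) *\<^sub>v X + Bb (c + 1) *\<^sub>v U) $ r * \<theta> $ c)"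
      using aff_mat_pair_mult_vec_index[OF Ab Bb X U True] by simp
    also have "(\<Sum>c<np. (Ab (c + 1) *\<^sub>v X + Bb (c + 1) *\<^sub>v U) $ r * \<theta> $ c) = (?E *\<^sub>v \<theta>) $ r"
      unfolding E\<theta> using True r dims_c
      by (intro sum.cong) (auto simp: response_sensitivity_def simp del: index_add_vec)
    finally show ?thesis
      using True A0 X U z' E by (simp add: response_offset_def)
  next
    case False
    hence r': "r - n < NY" using r by simp
    have "?Y $ r = (aff_mat np Cb \<theta> *\<^sub>v X + aff_mat np Db \<theta> *\<^sub>v U) $ (r - n)"
      using False r carr X U z' by simp
    also have "\<dots> = (Cb 0 *\<^sub>v X + Db 0 *\<^sub>v U) $ (r - n)
        + (\<Sum>c<np. (Cb (c + 1) *\<^sub>v X + Db (c + 1) *\<^sub>v U) $ (r - n) * \<theta> $ c)"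
      using aff_mat_pair_mult_vec_index[OF Cb Db X U r'] by simp
    also have "(\<Sum>c<np. (Cb (c + 1) *\<^sub>v X + Db (c + 1) *\<^sub>v U) $ (r - n) * \<theta> $ c) = (?E *\<^sub>v \<theta>) $ r"
      unfolding E\<theta> using False r dims_c
      by (intro sum.cong) (auto simp: response_sensitivity_def simp del: index_add_vec)
    finally show ?thesis
      using False r A0 X U z' E by (simp add: response_offset_def)
  qed
qed

definition closed_loop_response ::
  "nat \<Rightarrow> (nat \<Rightarrow> real mat) \<Rightarrow> (nat \<Rightarrow> real mat) \<Rightarrow> (nat \<Rightarrow> real mat) \<Rightarrow> (nat \<Rightarrow> real mat) \<Rightarrow>
   real mat \<Rightarrow> real vec \<Rightarrow> real vec \<Rightarrow> real vec \<Rightarrow> real vec \<Rightarrow> real vec" where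
  "closed_loop_response np Ab Bb Cb Db K V z' \<theta> X =
     (aff_mat np Ab \<theta> *\<^sub>v X + aff_mat np Bb \<theta> *\<^sub>v (K *\<^sub>v X + V) - z')
     @\<^sub>v (aff_mat np Cb \<theta> *\<^sub>v X + aff_mat np Db \<theta> *\<^sub>v (K *\<^sub>v X + V))"

context
  fixes np n N NY :: nat and Ab Bb Cb Db :: "nat \<Rightarrow> real mat" and K :: "real mat"
    and V z' :: "real vec"
  assumes Ab: "\<And>i. i \<le> np \<Longrightarrow> Ab i \<in> carrier_mat n n"
    and Bb: "\<And>i. i \<le> np \<Longrightarrow> Bb i \<in> carrier_mat n N"
    and Cb: "\<And>i. i \<le> np \<Longrightarrow> Cb i \<in> carrier_mat NY n"
    and Db: "\<And>i. i \<le> np \<Longrightarrow> Db i \<in> carrier_mat NY N"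
    and K: "K \<in> carrier_mat N n" and V: "V \<in> carrier_vec N" and z': "z' \<in> carrier_vec n"
begin

lemma closed_loop_response_affine:
  "affine_vec_map n (n + NY) (closed_loop_response np Ab Bb Cb Db K V z' \<theta>)"
proof -
  have A: "aff_mat np Ab \<theta> \<in> carrier_mat n n" "aff_mat np Bb \<theta> \<in> carrier_mat n N"
    "aff_mat np Cb \<theta> \<in> carrier_mat NY n" "aff_mat np Db \<theta> \<in> carrier_mat NY N"
    using Ab[of 0] Bb[of 0] Cb[of 0] Db[of 0] by (simp_all add: aff_mat_carrier)
  have U: "affine_vec_map n N (\<lambda>X. K *\<^sub>v X + V)"
    by (intro affine_vec_map_add affine_vec_map_mult_mat[OF K] affine_vec_map_id
        affine_vec_map_const V)
  show ?thesis
    unfolding closed_loop_response_def[abs_def]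
    by (intro affine_vec_map_append affine_vec_map_minus affine_vec_map_add affine_vec_map_const z'
        affine_vec_map_mult_mat[OF A(1)] affine_vec_map_mult_mat[OF A(2) U]
        affine_vec_map_mult_mat[OF A(3)] affine_vec_map_mult_mat[OF A(4) U] affine_vec_map_id)
qed

lemma closed_loop_response_eq_offset_plus_sensitivity:
  assumes X: "X \<in> carrier_vec n" and \<theta>: "\<theta> \<in> carrier_vec np"
  shows "closed_loop_response np Ab Bb Cb Db K V z' \<theta> X
       = response_offset Ab Bb Cb Db X (V + K *\<^sub>v X) z'
         + response_sensitivity (n + NY) np Ab Bb Cb Db X (V + K *\<^sub>v X) *\<^sub>v \<theta>"
proof -
  have "K *\<^sub>v X + V = V + K *\<^sub>v X" using K V X by (intro comm_add_vec) auto
  thus ?thesis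
    unfolding closed_loop_response_def
    using aff_response_eq_offset_plus_sensitivity[OF Ab Bb Cb Db X _ z' \<theta>] K V X by simp
qed

lemma response_offset_carrier:
  assumes X: "X \<in> carrier_vec n"
  shows "response_offset Ab Bb Cb Db X (V + K *\<^sub>v X) z' \<in> carrier_vec (n + NY)"
proof -
  have "Ab 0 \<in> carrier_mat n n" "Bb 0 \<in> carrier_mat n N" "Cb 0 \<in> carrier_mat NY n"
    "Db 0 \<in> carrier_mat NY N" "V + K *\<^sub>v X \<in> carrier_vec N"
    using Ab Bb Cb Db K V X by auto
  thus ?thesis
    using X z' unfolding response_offset_def
    by (meson append_carrier_vec minus_carrier_vec add_carrier_vec mult_mat_vec_carrier)
qed

lemma closed_loop_disturbance_iff:
  fixes Hx Fy :: "real mat" and \<alpha>' :: real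
  assumes Hx: "Hx \<in> carrier_mat q n" and Fy: "Fy \<in> carrier_mat mY NY"
    and Wx: "Wx \<subseteq> carrier_vec n" "Wx \<noteq> {}" "bounded_vset Wx"
    and Wy: "Wy \<subseteq> carrier_vec NY" "Wy \<noteq> {}" "bounded_vset Wy"
    and X: "X \<in> carrier_vec n"
  shows "((\<forall>wx\<in>Wx. aff_mat np Ab \<theta> *\<^sub>v X + aff_mat np Bb \<theta> *\<^sub>v (K *\<^sub>v X + V) + wx
               \<in> {x \<in> carrier_vec n. Hx *\<^sub>v (x - z') \<le> \<alpha>' \<cdot>\<^sub>v ones_vec q})
      \<and> (\<forall>wy\<in>Wy. aff_mat np Cb \<theta> *\<^sub>v X + aff_mat np Db \<theta> *\<^sub>v (K *\<^sub>v X + V) + wy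
               \<in> {y \<in> carrier_vec NY. Fy *\<^sub>v y \<le> ones_vec mY}))
      \<longleftrightarrow> diag_block_mat [Hx, Fy] *\<^sub>v closed_loop_response np Ab Bb Cb Db K V z' \<theta> X
          \<le> ((\<alpha>' \<cdot>\<^sub>v ones_vec q) @\<^sub>v ones_vec mY) - (row_max Hx Wx @\<^sub>v row_max Fy Wy)"
proof -
  have "aff_mat np Ab \<theta> \<in> carrier_mat n n" "aff_mat np Bb \<theta> \<in> carrier_mat n N"
    "aff_mat np Cb \<theta> \<in> carrier_mat NY n" "aff_mat np Db \<theta> \<in> carrier_mat NY N"
    using Ab[of 0] Bb[of 0] Cb[of 0] Db[of 0] by (simp_all add: aff_mat_carrier)
  thus ?thesis
    unfolding closed_loop_response_def using K V X
    by (intro robust_block_step_iff[OF Hx Fy _ z' _ Wx Wy]) auto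
qed

end

section \<open>The tube conditions\<close>

lemma tube_robust_constraint_iff_multipliers:
  fixes Hx G H\<theta> :: "real mat" and Y :: "real vec \<Rightarrow> real vec \<Rightarrow> real vec"
    and e :: "real vec \<Rightarrow> real vec" and E :: "real vec \<Rightarrow> real mat" and \<alpha> :: real
  assumes Hx: "Hx \<in> carrier_mat q n" and bdd: "bounded_vset (unit_polytope n q Hx)"
    and z: "z \<in> carrier_vec n" and \<alpha>: "\<alpha> \<ge> 0"
    and Y_affine: "\<And>\<theta>. \<theta> \<in> carrier_vec np \<Longrightarrow> affine_vec_map n R (\<lambda>x. Y \<theta> (z + \<alpha> \<cdot>\<^sub>v x))"
    and Y_vertex: "\<And>v \<theta>. extreme_point (unit_polytope n q Hx) v \<Longrightarrow> \<theta> \<in> carrier_vec np \<Longrightarrow>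
                     Y \<theta> (z + \<alpha> \<cdot>\<^sub>v v) = e v + E v *\<^sub>v \<theta>"
    and e: "\<And>v. extreme_point (unit_polytope n q Hx) v \<Longrightarrow> e v \<in> carrier_vec R"
    and E: "\<And>v. extreme_point (unit_polytope n q Hx) v \<Longrightarrow> E v \<in> carrier_mat R np"
    and G: "G \<in> carrier_mat m R" and \<beta>: "\<beta> \<in> carrier_vec m"
    and H\<theta>: "H\<theta> \<in> carrier_mat q\<theta> np" and h\<theta>: "h\<theta> \<in> carrier_vec q\<theta>"
    and \<theta>0: "\<theta>0 \<in> carrier_vec np" "H\<theta> *\<^sub>v \<theta>0 \<le> h\<theta>"
  shows "(\<forall>X\<in>{X \<in> carrier_vec n. Hx *\<^sub>v (X - z) \<le> \<alpha> \<cdot>\<^sub>v ones_vec q}.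
            \<forall>\<theta>\<in>{\<theta> \<in> carrier_vec np. H\<theta> *\<^sub>v \<theta> \<le> h\<theta>}. G *\<^sub>v Y \<theta> X \<le> \<beta>) \<longleftrightarrow>
         (\<forall>v. extreme_point (unit_polytope n q Hx) v \<longrightarrow>
            (\<exists>\<Lambda>. \<Lambda> \<in> carrier_mat m q\<theta> \<and> (\<forall>r<m. \<forall>c<q\<theta>. \<Lambda> $$ (r, c) \<ge> 0)
                 \<and> \<Lambda> *\<^sub>v h\<theta> + G *\<^sub>v e v \<le> \<beta> \<and> G * E v = \<Lambda> * H\<theta>))"
proof -
  let ?P = "unit_polytope n q Hx"
  let ?\<Theta> = "{\<theta> \<in> carrier_vec np. H\<theta> *\<^sub>v \<theta> \<le> h\<theta>}"
  have "(\<forall>X\<in>{X \<in> carrier_vec n. Hx *\<^sub>v (X - z) \<le> \<alpha> \<cdot>\<^sub>v ones_vec q}. \<forall>\<theta>\<in>?\<Theta>. G *\<^sub>v Y \<theta> X \<le> \<beta>)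
      \<longleftrightarrow> (\<forall>\<theta>\<in>?\<Theta>. \<forall>x\<in>?P. G *\<^sub>v Y \<theta> (z + \<alpha> \<cdot>\<^sub>v x) \<le> \<beta>)"
    unfolding tube_eq_image_unit_polytope[OF Hx bdd z \<alpha>] by blast
  also have "\<dots> \<longleftrightarrow> (\<forall>\<theta>\<in>?\<Theta>. \<forall>v. extreme_point ?P v \<longrightarrow> G *\<^sub>v Y \<theta> (z + \<alpha> \<cdot>\<^sub>v v) \<le> \<beta>)"
    using affine_vec_map_le_on_unit_polytope[OF Hx bdd affine_vec_map_mult_mat[OF G Y_affine]]
    by (auto simp: extreme_point_def)
  also have "\<dots> \<longleftrightarrow> (\<forall>v. extreme_point ?P v \<longrightarrow>
      (\<forall>\<theta>\<in>carrier_vec np. H\<theta> *\<^sub>v \<theta> \<le> h\<theta> \<longrightarrow> G *\<^sub>v e v + (G * E v) *\<^sub>v \<theta> \<le> \<beta>))"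
  proof -
    have "G *\<^sub>v Y \<theta> (z + \<alpha> \<cdot>\<^sub>v v) = G *\<^sub>v e v + (G * E v) *\<^sub>v \<theta>"
      if "extreme_point ?P v" "\<theta> \<in> carrier_vec np" for v \<theta>
      using Y_vertex[OF that] e[OF that(1)] E[OF that(1)] G that(2)
      by (simp add: mult_add_distrib_mat_vec[OF G])
    thus ?thesis by auto
  qed
  also have "\<dots> \<longleftrightarrow> (\<forall>v. extreme_point ?P v \<longrightarrow>
      (\<exists>\<Lambda>. \<Lambda> \<in> carrier_mat m q\<theta> \<and> (\<forall>r<m. \<forall>c<q\<theta>. \<Lambda> $$ (r, c) \<ge> 0)
           \<and> \<Lambda> *\<^sub>v h\<theta> + G *\<^sub>v e v \<le> \<beta> \<and> G * E v = \<Lambda> * H\<theta>))"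
    using polyhedron_affine_ineq_iff_multipliers[OF _ _ \<beta> H\<theta> h\<theta> \<theta>0] e E G by auto
  finally show ?thesis .
qed

lemma tube_state_input_constraints_iff:
  fixes Hx F G K :: "real mat" and \<alpha> :: real
  assumes Hx: "Hx \<in> carrier_mat q n" and bdd: "bounded_vset (unit_polytope n q Hx)"
    and F: "F \<in> carrier_mat cx n" and G: "G \<in> carrier_mat cu N" and K: "K \<in> carrier_mat N n"
    and z: "z \<in> carrier_vec n" and V: "V \<in> carrier_vec N" and \<alpha>: "\<alpha> \<ge> 0"
  shows "(\<forall>X\<in>{X \<in> carrier_vec n. Hx *\<^sub>v (X - z) \<le> \<alpha> \<cdot>\<^sub>v ones_vec q}.
            X \<in> {x \<in> carrier_vec n. F *\<^sub>v x \<le> ones_vec cx}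
          \<and> K *\<^sub>v X + V \<in> {u \<in> carrier_vec N. G *\<^sub>v u \<le> ones_vec cu}) \<longleftrightarrow>
         F *\<^sub>v z + \<alpha> \<cdot>\<^sub>v row_max F (unit_polytope n q Hx) \<le> ones_vec cx
       \<and> G *\<^sub>v (K *\<^sub>v z) + G *\<^sub>v V + \<alpha> \<cdot>\<^sub>v row_max (G * K) (unit_polytope n q Hx) \<le> ones_vec cu"
proof -
  let ?T = "{X \<in> carrier_vec n. Hx *\<^sub>v (X - z) \<le> \<alpha> \<cdot>\<^sub>v ones_vec q}"
  have GK: "G * K \<in> carrier_mat cu n" using G K by simp
  have "X \<in> {x \<in> carrier_vec n. F *\<^sub>v x \<le> ones_vec cx} \<longleftrightarrow> F *\<^sub>v X + 0\<^sub>v cx \<le> ones_vec cx"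
    and "K *\<^sub>v X + V \<in> {u \<in> carrier_vec N. G *\<^sub>v u \<le> ones_vec cu}
           \<longleftrightarrow> (G * K) *\<^sub>v X + G *\<^sub>v V \<le> ones_vec cu"
    if "X \<in> ?T" for X
    using that F G K V by (auto simp: mult_add_distrib_mat_vec[OF G])
  hence "(\<forall>X\<in>?T. X \<in> {x \<in> carrier_vec n. F *\<^sub>v x \<le> ones_vec cx}
          \<and> K *\<^sub>v X + V \<in> {u \<in> carrier_vec N. G *\<^sub>v u \<le> ones_vec cu}) \<longleftrightarrow>
        (\<forall>X\<in>?T. F *\<^sub>v X + 0\<^sub>v cx \<le> ones_vec cx) \<and> (\<forall>X\<in>?T. (G * K) *\<^sub>v X + G *\<^sub>v V \<le> ones_vec cu)"
    by blast
  also have "\<dots> \<longleftrightarrow> F *\<^sub>v z + 0\<^sub>v cx + \<alpha> \<cdot>\<^sub>v row_max F (unit_polytope n q Hx) \<le> ones_vec cx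
       \<and> (G * K) *\<^sub>v z + G *\<^sub>v V + \<alpha> \<cdot>\<^sub>v row_max (G * K) (unit_polytope n q Hx) \<le> ones_vec cu"
    using tube_affine_constraint_iff[OF Hx bdd z \<alpha> F] tube_affine_constraint_iff[OF Hx bdd z \<alpha> GK]
      G V by (simp add: ones_vec_def)
  finally show ?thesis using F G K z by simp
qed

lemma robust_tube_step_iff:
  fixes Ab Bb Cb Db :: "nat \<Rightarrow> real mat" and Hx Fy K H\<theta> :: "real mat" and \<alpha> \<alpha>' :: real
  assumes Ab: "\<And>i. i \<le> np \<Longrightarrow> Ab i \<in> carrier_mat n n"
    and Bb: "\<And>i. i \<le> np \<Longrightarrow> Bb i \<in> carrier_mat n N"
    and Cb: "\<And>i. i \<le> np \<Longrightarrow> Cb i \<in> carrier_mat NY n"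
    and Db: "\<And>i. i \<le> np \<Longrightarrow> Db i \<in> carrier_mat NY N"
    and Hx: "Hx \<in> carrier_mat q n" and bdd: "bounded_vset (unit_polytope n q Hx)"
    and Fy: "Fy \<in> carrier_mat mY NY" and K: "K \<in> carrier_mat N n" and V: "V \<in> carrier_vec N"
    and z: "z \<in> carrier_vec n" and z': "z' \<in> carrier_vec n" and \<alpha>: "\<alpha> \<ge> 0"
    and H\<theta>: "H\<theta> \<in> carrier_mat q\<theta> np" and h\<theta>: "h\<theta> \<in> carrier_vec q\<theta>"
    and \<Theta>: "{\<theta> \<in> carrier_vec np. H\<theta> *\<^sub>v \<theta> \<le> h\<theta>} \<noteq> {}"
    and xs: "set xs = {v. extreme_point (unit_polytope n q Hx) v}"
    and Wx: "Wx \<subseteq> carrier_vec n" "Wx \<noteq> {}" "bounded_vset Wx"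
    and Wy: "Wy \<subseteq> carrier_vec NY" "Wy \<noteq> {}" "bounded_vset Wy"
  shows "((\<forall>X\<in>{X \<in> carrier_vec n. Hx *\<^sub>v (X - z) \<le> \<alpha> \<cdot>\<^sub>v ones_vec q}.
             \<forall>\<theta>\<in>{\<theta> \<in> carrier_vec np. H\<theta> *\<^sub>v \<theta> \<le> h\<theta>}. \<forall>wx\<in>Wx.
               aff_mat np Ab \<theta> *\<^sub>v X + aff_mat np Bb \<theta> *\<^sub>v (K *\<^sub>v X + V) + wx
                 \<in> {x \<in> carrier_vec n. Hx *\<^sub>v (x - z') \<le> \<alpha>' \<cdot>\<^sub>v ones_vec q})
        \<and> (\<forall>X\<in>{X \<in> carrier_vec n. Hx *\<^sub>v (X - z) \<le> \<alpha> \<cdot>\<^sub>v ones_vec q}.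
             \<forall>\<theta>\<in>{\<theta> \<in> carrier_vec np. H\<theta> *\<^sub>v \<theta> \<le> h\<theta>}. \<forall>wy\<in>Wy.
               aff_mat np Cb \<theta> *\<^sub>v X + aff_mat np Db \<theta> *\<^sub>v (K *\<^sub>v X + V) + wy
                 \<in> {y \<in> carrier_vec NY. Fy *\<^sub>v y \<le> ones_vec mY})) \<longleftrightarrow>
     (\<forall>i<length xs. \<exists>\<Lambda>. \<Lambda> \<in> carrier_mat (q + mY) q\<theta>
        \<and> (\<forall>r<q + mY. \<forall>c<q\<theta>. \<Lambda> $$ (r, c) \<ge> 0)
        \<and> \<Lambda> *\<^sub>v h\<theta> + diag_block_mat [Hx, Fy] *\<^sub>v
             response_offset Ab Bb Cb Db (z + \<alpha> \<cdot>\<^sub>v xs ! i) (V + K *\<^sub>v (z + \<alpha> \<cdot>\<^sub>v xs ! i)) z'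
          \<le> ((\<alpha>' \<cdot>\<^sub>v ones_vec q) @\<^sub>v ones_vec mY) - (row_max Hx Wx @\<^sub>v row_max Fy Wy)
        \<and> diag_block_mat [Hx, Fy] * response_sensitivity (n + NY) np Ab Bb Cb Db
             (z + \<alpha> \<cdot>\<^sub>v xs ! i) (V + K *\<^sub>v (z + \<alpha> \<cdot>\<^sub>v xs ! i)) = \<Lambda> * H\<theta>)"
  (is "?robust \<longleftrightarrow> (\<forall>i<length xs. ?multipliers (xs ! i))")
proof -
  let ?T = "{X \<in> carrier_vec n. Hx *\<^sub>v (X - z) \<le> \<alpha> \<cdot>\<^sub>v ones_vec q}"
  let ?\<Theta> = "{\<theta> \<in> carrier_vec np. H\<theta> *\<^sub>v \<theta> \<le> h\<theta>}"
  let ?P = "unit_polytope n q Hx"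
  let ?Y = "closed_loop_response np Ab Bb Cb Db K V z'"
  let ?\<beta> = "((\<alpha>' \<cdot>\<^sub>v ones_vec q) @\<^sub>v ones_vec mY) - (row_max Hx Wx @\<^sub>v row_max Fy Wy)"
  obtain \<theta>0 where \<theta>0: "\<theta>0 \<in> carrier_vec np" "H\<theta> *\<^sub>v \<theta>0 \<le> h\<theta>" using \<Theta> by auto
  have Hp: "diag_block_mat [Hx, Fy] \<in> carrier_mat (q + mY) (n + NY)"
    by (rule diag_block_mat_two_carrier[OF Hx Fy])
  have "?robust \<longleftrightarrow> (\<forall>X\<in>?T. \<forall>\<theta>\<in>?\<Theta>. diag_block_mat [Hx, Fy] *\<^sub>v ?Y \<theta> X \<le> ?\<beta>)"
    using closed_loop_disturbance_iff[where np = np and Ab = Ab and Bb = Bb and Cb = Cb and Db = Db,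
        OF Ab Bb Cb Db K V z' Hx Fy Wx Wy]
    unfolding ball_conj_distrib[symmetric] by (intro ball_cong refl) blast+
  also have "\<dots> \<longleftrightarrow> (\<forall>v. extreme_point ?P v \<longrightarrow> ?multipliers v)"
  proof (rule tube_robust_constraint_iff_multipliers[OF Hx bdd z \<alpha> _ _ _ _ Hp _ H\<theta> h\<theta> \<theta>0])
    have "affine_vec_map n n (\<lambda>x. z + \<alpha> \<cdot>\<^sub>v x)"
      by (intro affine_vec_map_add affine_vec_map_const z affine_vec_map_smult affine_vec_map_id)
    thus "affine_vec_map n (n + NY) (\<lambda>x. ?Y \<theta> (z + \<alpha> \<cdot>\<^sub>v x))" for \<theta>
      by (rule affine_vec_map_comp[OF _ closed_loop_response_affine[OF Ab Bb Cb Db K V z']])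
    fix v assume "extreme_point ?P v"
    hence X: "z + \<alpha> \<cdot>\<^sub>v v \<in> carrier_vec n"
      using z by (auto simp: extreme_point_def unit_polytope_def)
    show "?Y \<theta> (z + \<alpha> \<cdot>\<^sub>v v) = response_offset Ab Bb Cb Db (z + \<alpha> \<cdot>\<^sub>v v) (V + K *\<^sub>v (z + \<alpha> \<cdot>\<^sub>v v)) z'
        + response_sensitivity (n + NY) np Ab Bb Cb Db (z + \<alpha> \<cdot>\<^sub>v v) (V + K *\<^sub>v (z + \<alpha> \<cdot>\<^sub>v v)) *\<^sub>v \<theta>"
      if "\<theta> \<in> carrier_vec np" for \<theta>
      by (rule closed_loop_response_eq_offset_plus_sensitivity[OF Ab Bb Cb Db K V z' X that])
    show "response_offset Ab Bb Cb Db (z + \<alpha> \<cdot>\<^sub>v v) (V + K *\<^sub>v (z + \<alpha> \<cdot>\<^sub>v v)) z'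
        \<in> carrier_vec (n + NY)"
      by (rule response_offset_carrier[OF Ab Bb Cb Db K V z' X])
    show "response_sensitivity (n + NY) np Ab Bb Cb Db (z + \<alpha> \<cdot>\<^sub>v v) (V + K *\<^sub>v (z + \<alpha> \<cdot>\<^sub>v v))
        \<in> carrier_mat (n + NY) np"
      by (simp add: response_sensitivity_def)
  next
    show "?\<beta> \<in> carrier_vec (q + mY)" using Hx Fy by (simp add: ones_vec_def row_max_def)
  qed
  also have "\<dots> \<longleftrightarrow> (\<forall>i<length xs. ?multipliers (xs ! i))"
    using all_set_conv_all_nth[of xs ?multipliers] xs by auto
  finally show ?thesis .
qed

lemma bounded_choice_conj_iff:
  fixes n N :: nat
  assumes n: "n > 0" and "N > 0"
    and split: "\<And>v l M. v < n \<Longrightarrow> l < N \<Longrightarrow> \<Phi> v l M \<longleftrightarrow> Q l \<and> P v l M"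
  shows "(\<exists>\<Lambda>. \<forall>v<n. \<forall>l<N. \<Phi> v l (\<Lambda> v l)) \<longleftrightarrow> (\<forall>l<N. Q l) \<and> (\<forall>l<N. \<forall>v<n. \<exists>M. P v l M)"
proof
  assume "\<exists>\<Lambda>. \<forall>v<n. \<forall>l<N. \<Phi> v l (\<Lambda> v l)"
  then obtain \<Lambda> where \<Lambda>: "\<forall>v<n. \<forall>l<N. \<Phi> v l (\<Lambda> v l)" ..
  have "Q l" if "l < N" for l
    using \<Lambda> n that split[OF n that, of "\<Lambda> 0 l"] by simp
  moreover have "P v l (\<Lambda> v l)" if "v < n" "l < N" for v l
    using \<Lambda> that split[OF that, of "\<Lambda> v l"] by simp
  ultimately show "(\<forall>l<N. Q l) \<and> (\<forall>l<N. \<forall>v<n. \<exists>M. P v l M)" by blast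
next
  assume asm: "(\<forall>l<N. Q l) \<and> (\<forall>l<N. \<forall>v<n. \<exists>M. P v l M)"
  have "\<Phi> v l (SOME M. P v l M)" if "v < n" "l < N" for v l
    using asm that split[OF that, of "SOME M. P v l M"] someI_ex[of "P v l"] by simp
  thus "\<exists>\<Lambda>. \<forall>v<n. \<forall>l<N. \<Phi> v l (\<Lambda> v l)" by (intro exI[of _ "\<lambda>v l. SOME M. P v l M"]) simp
qed

theorem proposition1:
  fixes nx nu np p Np cx cu qx q\<theta> :: nat
    and F G Hx H\<theta> K :: "real mat" and h\<theta> :: "real vec"
    and Ab Bb Cb Db :: "nat \<Rightarrow> real mat"
    and Wx Wy :: "real vec set"
    and xs :: "real vec list"
    and z :: "nat \<Rightarrow> real vec" and \<alpha> :: "nat \<Rightarrow> real" and V :: "nat \<Rightarrow> real vec"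
    and Xj :: "real vec"
  defines "XX \<equiv> {x \<in> carrier_vec nx. F *\<^sub>v x \<le> ones_vec cx}"
      and "UU \<equiv> {u \<in> carrier_vec nu. G *\<^sub>v u \<le> ones_vec cu}"
      and "\<Theta> \<equiv> {\<theta> \<in> carrier_vec np. H\<theta> *\<^sub>v \<theta> \<le> h\<theta>}"
      and "X0 \<equiv> {x \<in> carrier_vec nx. Hx *\<^sub>v x \<le> ones_vec qx}"
      and "Fp \<equiv> diag_block_mat (replicate (p - 1) F)"
      and "Gp \<equiv> diag_block_mat (replicate p G)"
      and "Hp \<equiv> diag_block_mat [Hx, diag_block_mat (replicate (p - 1) F)]"
      and "A \<equiv> aff_mat np Ab" and "B \<equiv> aff_mat np Bb"
      and "C \<equiv> aff_mat np Cb" and "D \<equiv> aff_mat np Db"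
      and "Xpm1 \<equiv> {y \<in> carrier_vec ((p - 1) * nx). (diag_block_mat (replicate (p - 1) F)) *\<^sub>v y \<le> ones_vec (cx * (p - 1))}"
      and "Up \<equiv> {u \<in> carrier_vec (p * nu). (diag_block_mat (replicate p G)) *\<^sub>v u \<le> ones_vec (cu * p)}"
      and "fbar \<equiv> row_max F {x \<in> carrier_vec nx. Hx *\<^sub>v x \<le> ones_vec qx}"
      and "gbar \<equiv> row_max (diag_block_mat (replicate p G) * K) {x \<in> carrier_vec nx. Hx *\<^sub>v x \<le> ones_vec qx}"
      and "wbar \<equiv> row_max Hx Wx @\<^sub>v row_max (diag_block_mat (replicate (p - 1) F)) Wy"
      and "Tube \<equiv> (\<lambda>l. {x \<in> carrier_vec nx. Hx *\<^sub>v (x - z l) \<le> \<alpha> l \<cdot>\<^sub>v ones_vec qx})"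
      and "Upol \<equiv> (\<lambda>l X. K *\<^sub>v X + V l)"
      and "Phi \<equiv> (\<lambda>l. (\<alpha> l \<cdot>\<^sub>v ones_vec qx) @\<^sub>v ones_vec (cx * (p - 1)))"
      and "Ev \<equiv> (\<lambda>v l. let Xv = z l + \<alpha> l \<cdot>\<^sub>v (xs ! v); Uv = V l + K *\<^sub>v Xv in
              mat (nx + (p - 1) * nx) np (\<lambda>(r, c).
                ((Ab (c + 1) *\<^sub>v Xv + Bb (c + 1) *\<^sub>v Uv)
                 @\<^sub>v (Cb (c + 1) *\<^sub>v Xv + Db (c + 1) *\<^sub>v Uv)) $ r))"
      and "ev \<equiv> (\<lambda>v l. let Xv = z l + \<alpha> l \<cdot>\<^sub>v (xs ! v); Uv = V l + K *\<^sub>v Xv in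
              (Ab 0 *\<^sub>v Xv + Bb 0 *\<^sub>v Uv - z (l + 1))
               @\<^sub>v (Cb 0 *\<^sub>v Xv + Db 0 *\<^sub>v Uv))"
  assumes p_ge: "p \<ge> 1" and Np_ge: "Np \<ge> 1"
    and F_dim: "F \<in> carrier_mat cx nx" and G_dim: "G \<in> carrier_mat cu nu"
    and XX_bdd: "bounded_vset XX" and UU_bdd: "bounded_vset UU"
    and Ab_dim: "\<And>i. i \<le> np \<Longrightarrow> Ab i \<in> carrier_mat nx nx"
    and Bb_dim: "\<And>i. i \<le> np \<Longrightarrow> Bb i \<in> carrier_mat nx (p * nu)"
    and Cb_dim: "\<And>i. i \<le> np \<Longrightarrow> Cb i \<in> carrier_mat ((p - 1) * nx) nx"
    and Db_dim: "\<And>i. i \<le> np \<Longrightarrow> Db i \<in> carrier_mat ((p - 1) * nx) (p * nu)"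
    and H\<theta>_dim: "H\<theta> \<in> carrier_mat q\<theta> np" and h\<theta>_dim: "h\<theta> \<in> carrier_vec q\<theta>"
    and \<Theta>_ne: "\<Theta> \<noteq> {}" and \<Theta>_bdd: "bounded_vset \<Theta>"
    and Wx_poly: "is_polytope nx Wx" and Wx_ne: "Wx \<noteq> {}" and Wx_bdd: "bounded_vset Wx"
    and Wy_poly: "is_polytope ((p - 1) * nx) Wy" and Wy_ne: "Wy \<noteq> {}" and Wy_bdd: "bounded_vset Wy"
    and Hx_dim: "Hx \<in> carrier_mat qx nx" and X0_bdd: "bounded_vset X0"
    and xs_vert: "distinct xs" "set xs = {x. extreme_point X0 x}"
    and K_dim: "K \<in> carrier_mat (p * nu) nx"
    and z_dim: "\<And>l. l \<le> Np \<Longrightarrow> z l \<in> carrier_vec nx"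
    and \<alpha>_nonneg: "\<And>l. l \<le> Np \<Longrightarrow> \<alpha> l \<ge> 0"
    and V_dim: "\<And>l. l < Np \<Longrightarrow> V l \<in> carrier_vec (p * nu)"
    and Xj_dim: "Xj \<in> carrier_vec nx"
  shows "(Xj \<in> Tube 0
          \<and> (\<forall>l<Np. \<forall>X\<in>Tube l. \<forall>\<theta>\<in>\<Theta>. \<forall>wx\<in>Wx.
                A \<theta> *\<^sub>v X + B \<theta> *\<^sub>v Upol l X + wx \<in> Tube (l + 1))
          \<and> (\<forall>l<Np. \<forall>X\<in>Tube l. X \<in> XX \<and> Upol l X \<in> Up)
          \<and> (\<forall>l<Np. \<forall>X\<in>Tube l. \<forall>\<theta>\<in>\<Theta>. \<forall>wy\<in>Wy.
                C \<theta> *\<^sub>v X + D \<theta> *\<^sub>v Upol l X + wy \<in> Xpm1))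
         \<longleftrightarrow>
         (\<exists>\<Lambda> :: nat \<Rightarrow> nat \<Rightarrow> real mat.
            (\<forall>v<length xs. \<forall>l<Np.
               \<Lambda> v l \<in> carrier_mat (qx + cx * (p - 1)) q\<theta>
             \<and> (\<forall>r<qx + cx * (p - 1). \<forall>c<q\<theta>. \<Lambda> v l $$ (r, c) \<ge> 0)
             \<and> F *\<^sub>v z l + \<alpha> l \<cdot>\<^sub>v fbar \<le> ones_vec cx
             \<and> Gp *\<^sub>v (K *\<^sub>v z l) + Gp *\<^sub>v V l + \<alpha> l \<cdot>\<^sub>v gbar \<le> ones_vec (cu * p)
             \<and> Hx *\<^sub>v (Xj - z 0) \<le> \<alpha> 0 \<cdot>\<^sub>v ones_vec qx
             \<and> \<Lambda> v l *\<^sub>v h\<theta> + Hp *\<^sub>v ev v l \<le> Phi (l + 1) - wbar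
             \<and> Hp * Ev v l = \<Lambda> v l * H\<theta>))"
proof -
  have X0: "X0 = unit_polytope nx qx Hx" by (simp add: X0_def unit_polytope_def)
  have bdd: "bounded_vset (unit_polytope nx qx Hx)" using X0_bdd X0 by simp
  have W: "Wx \<subseteq> carrier_vec nx" "Wy \<subseteq> carrier_vec ((p - 1) * nx)"
    using Wx_poly Wy_poly by (auto simp: is_polytope_def)
  have xs_ne: "length xs > 0" and Np_pos: "Np > 0"
    using unit_polytope_has_extreme_point[OF Hx_dim bdd] xs_vert(2) X0 Np_ge by auto
  define C1 where "C1 \<longleftrightarrow> Hx *\<^sub>v (Xj - z 0) \<le> \<alpha> 0 \<cdot>\<^sub>v ones_vec qx"
  define C3 where "C3 l \<longleftrightarrow> F *\<^sub>v z l + \<alpha> l \<cdot>\<^sub>v fbar \<le> ones_vec cx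
      \<and> Gp *\<^sub>v (K *\<^sub>v z l) + Gp *\<^sub>v V l + \<alpha> l \<cdot>\<^sub>v gbar \<le> ones_vec (cu * p)" for l
  define Mult where "Mult v l \<Lambda> \<longleftrightarrow> \<Lambda> \<in> carrier_mat (qx + cx * (p - 1)) q\<theta>
      \<and> (\<forall>r<qx + cx * (p - 1). \<forall>c<q\<theta>. \<Lambda> $$ (r, c) \<ge> 0)
      \<and> \<Lambda> *\<^sub>v h\<theta> + Hp *\<^sub>v ev v l \<le> Phi (l + 1) - wbar \<and> Hp * Ev v l = \<Lambda> * H\<theta>" for v l \<Lambda>
  have i: "Xj \<in> Tube 0 \<longleftrightarrow> C1"
    using Xj_dim by (simp add: Tube_def C1_def)
  have iii: "(\<forall>X\<in>Tube l. X \<in> XX \<and> Upol l X \<in> Up) \<longleftrightarrow> C3 l" if "l < Np" for l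
    using tube_state_input_constraints_iff[OF Hx_dim bdd F_dim
        diag_block_mat_replicate_carrier[OF G_dim] K_dim z_dim V_dim \<alpha>_nonneg] that
    unfolding C3_def Tube_def XX_def Up_def Upol_def fbar_def gbar_def Gp_def unit_polytope_def
    by simp
  have ii_iv: "((\<forall>X\<in>Tube l. \<forall>\<theta>\<in>\<Theta>. \<forall>wx\<in>Wx. A \<theta> *\<^sub>v X + B \<theta> *\<^sub>v Upol l X + wx \<in> Tube (l + 1))
      \<and> (\<forall>X\<in>Tube l. \<forall>\<theta>\<in>\<Theta>. \<forall>wy\<in>Wy. C \<theta> *\<^sub>v X + D \<theta> *\<^sub>v Upol l X + wy \<in> Xpm1)) \<longleftrightarrow>
      (\<forall>v<length xs. \<exists>\<Lambda>. Mult v l \<Lambda>)" if "l < Np" for l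
    using robust_tube_step_iff[OF Ab_dim Bb_dim Cb_dim Db_dim Hx_dim bdd
        diag_block_mat_replicate_carrier[OF F_dim] K_dim V_dim z_dim z_dim \<alpha>_nonneg H\<theta>_dim h\<theta>_dim
        \<Theta>_ne[unfolded \<Theta>_def] xs_vert(2)[unfolded X0] W(1) Wx_ne Wx_bdd W(2) Wy_ne Wy_bdd] that
    unfolding Mult_def Tube_def \<Theta>_def A_def B_def C_def D_def Upol_def Xpm1_def Hp_def Phi_def
      wbar_def ev_def Ev_def response_offset_def response_sensitivity_def Let_def
    by simp
  have regroup: "\<And>N a c1 A D B c3 m. (a \<longleftrightarrow> c1) \<Longrightarrow> (\<And>l. l < N \<Longrightarrow> B l \<longleftrightarrow> c3 l) \<Longrightarrow>
      (\<And>l. l < N \<Longrightarrow> A l \<and> D l \<longleftrightarrow> m l) \<Longrightarrow> (0::nat) < N \<Longrightarrow>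
      (a \<and> (\<forall>l<N. A l) \<and> (\<forall>l<N. B l) \<and> (\<forall>l<N. D l)) \<longleftrightarrow> (\<forall>l<N. c3 l \<and> c1) \<and> (\<forall>l<N. m l)"
    by blast
  show ?thesis
    by (subst bounded_choice_conj_iff[OF xs_ne Np_pos, where Q = "\<lambda>l. C3 l \<and> C1" and P = Mult])
      ((auto simp: Mult_def C3_def C1_def)[1], rule regroup[OF i iii ii_iv Np_pos])
qed

end
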